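(* Let $a_{4,0},a_{2,2},a_{0,4}\geqslant0$ with $a_{4,0}+a_{2,2}>0$, $a_{2,2}+a_{0,4}>0$, let $t\in\mathbb{R}$ and $W_t(x,y)=e^{-(a_{4,0}x^4+a_{2,2}x^2y^2+a_{0,4}y^4)+t(x^2+y^2)}$. Let $\{\mathbb{Q}_n(t)\}_{n\geqslant0}$ be the monic orthogonal polynomial system for $W_t$ with three term relation matrices $E_{n,1}(t),E_{n,2}(t)$ (see context), and set $\mathbf{E}_n(t)=E_{n,1}(t)+E_{n,2}(t)$ for $n\geqslant1$ and $$V_{n+1}(t)=L_{n,1}E_{n+1,1}(t)+L_{n,2}E_{n+1,2}(t)+E_{n,1}(t)L_{n-1,1}+E_{n,2}(t)L_{n-1,2}.$$ Then for all $n\geqslant1$, $$\dot{\mathbf{E}}_n(t)=V_{n+1}(t)\mathbf{E}_n(t)-\mathbf{E}_n(t)V_n(t),$$ where the dot denotes derivative with respect to $t$.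
   Context: $\mathbb{X}_n=(x^n,x^{n-1}y,\dots,y^n)^T$. $L_{n,1}=(I_{n+1}\,|\,0)$ and $L_{n,2}=(0\,|\,I_{n+1})$ are $(n+1)\times(n+2)$ matrices (so $x\mathbb{X}_n=L_{n,1}\mathbb{X}_{n+1}$, $y\mathbb{X}_n=L_{n,2}\mathbb{X}_{n+1}$). Inner product $(f,g)_t=\iint_{\mathbb{R}^2}fgW_t\,dx\,dy$, applied entrywise to vectors. The monic orthogonal polynomial system is the sequence of column vectors $\mathbb{Q}_n(t)=\mathbb{X}_n+(\text{vector of polynomials of total degree}<n)$, with coefficients depending on $t$, such that $(\mathbb{Q}_n(t),\mathbb{Q}_m(t)^T)_t=0$ for $m\neq n$ and $H_n(t):=(\mathbb{Q}_n(t),\mathbb{Q}_n(t)^T)_t$ is symmetric positive definite. It satisfies, for $n\geqslant0$, $x\mathbb{Q}_n(t)=L_{n,1}\mathbb{Q}_{n+1}(t)+E_{n,1}(t)\mathbb{Q}_{n-1}(t)$ and $y\mathbb{Q}_n(t)=L_{n,2}\mathbb{Q}_{n+1}(t)+E_{n,2}(t)\mathbb{Q}_{n-1}(t)$, with $\mathbb{Q}_{-1}=0$, $\mathbb{Q}_0=1$, and $E_{n,i}(t)$ of size $(n+1)\times n$ (with $E_{0,i}$ taken as zero). *)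

theory Defs
  imports "HOL-Analysis.Analysis" "Jordan_Normal_Form.Matrix"
begin

definition W :: "real \<Rightarrow> real \<Rightarrow> real \<Rightarrow> real \<Rightarrow> real \<Rightarrow> real \<Rightarrow> real" where
  "W a40 a22 a04 t x y =
     exp (- (a40 * x ^ 4 + a22 * x\<^sup>2 * y\<^sup>2 + a04 * y ^ 4) + t * (x\<^sup>2 + y\<^sup>2))"

definition ip :: "real \<Rightarrow> real \<Rightarrow> real \<Rightarrow> real \<Rightarrow>
    (real \<Rightarrow> real \<Rightarrow> real) \<Rightarrow> (real \<Rightarrow> real \<Rightarrow> real) \<Rightarrow> real" where
  "ip a40 a22 a04 t f g =
     integral\<^sup>L (lborel :: (real \<times> real) measure)
       (\<lambda>p. f (fst p) (snd p) * g (fst p) (snd p) * W a40 a22 a04 t (fst p) (snd p))"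

definition poly_deg_lt :: "nat \<Rightarrow> (real \<Rightarrow> real \<Rightarrow> real) \<Rightarrow> bool" where
  "poly_deg_lt n p \<longleftrightarrow> (\<exists>c :: nat \<Rightarrow> nat \<Rightarrow> real.
     \<forall>x y. p x y = (\<Sum>(j, k) \<in> {(j, k). j + k < n}. c j k * x ^ j * y ^ k))"

text \<open>Q n i (for i \<le> n) is the i-th entry of the column vector Q_n, i.e.
  Q n i = x^(n-i) y^i + (lower degree terms).  Monic orthogonal polynomial system
  with respect to the weight W_t.\<close>
definition monic_OPS :: "real \<Rightarrow> real \<Rightarrow> real \<Rightarrow> real \<Rightarrow>
    (nat \<Rightarrow> nat \<Rightarrow> real \<Rightarrow> real \<Rightarrow> real) \<Rightarrow> bool" where
  "monic_OPS a40 a22 a04 t Q \<longleftrightarrow>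
     (\<forall>n i. i \<le> n \<longrightarrow>
        poly_deg_lt n (\<lambda>x y. Q n i x y - x ^ (n - i) * y ^ i)) \<and>
     (\<forall>n m i j. n \<noteq> m \<longrightarrow> i \<le> n \<longrightarrow> j \<le> m \<longrightarrow>
        ip a40 a22 a04 t (Q n i) (Q m j) = 0) \<and>
     (\<forall>n (v :: nat \<Rightarrow> real). (\<exists>i\<le>n. v i \<noteq> 0) \<longrightarrow>
        (\<Sum>i\<le>n. \<Sum>j\<le>n. v i * v j * ip a40 a22 a04 t (Q n i) (Q n j)) > 0)"

definition L1 :: "nat \<Rightarrow> real mat" where
  "L1 n = mat (n + 1) (n + 2) (\<lambda>(i, j). if j = i then 1 else 0)"

definition L2 :: "nat \<Rightarrow> real mat" where
  "L2 n = mat (n + 1) (n + 2) (\<lambda>(i, j). if j = i + 1 then 1 else 0)"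

text \<open>Three term relations x Q_n = L_{n,1} Q_{n+1} + E_{n,1} Q_{n-1},
  y Q_n = L_{n,2} Q_{n+1} + E_{n,2} Q_{n-1} (componentwise, Q_{-1} = 0),
  with E_{n,i} of size (n+1) x n and E_{0,i} = 0.\<close>
definition three_term :: "(nat \<Rightarrow> nat \<Rightarrow> real \<Rightarrow> real \<Rightarrow> real) \<Rightarrow>
    (nat \<Rightarrow> real mat) \<Rightarrow> (nat \<Rightarrow> real mat) \<Rightarrow> bool" where
  "three_term Q E1 E2 \<longleftrightarrow>
     (\<forall>n. E1 n \<in> carrier_mat (n + 1) n \<and> E2 n \<in> carrier_mat (n + 1) n) \<and>
     E1 0 = 0\<^sub>m 1 0 \<and> E2 0 = 0\<^sub>m 1 0 \<and>
     (\<forall>n i x y. i \<le> n \<longrightarrow>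
        x * Q n i x y = Q (n + 1) i x y + (\<Sum>j<n. E1 n $$ (i, j) * Q (n - 1) j x y)) \<and>
     (\<forall>n i x y. i \<le> n \<longrightarrow>
        y * Q n i x y = Q (n + 1) (i + 1) x y + (\<Sum>j<n. E2 n $$ (i, j) * Q (n - 1) j x y))"

text \<open>V_{n+1} = L_{n,1}E_{n+1,1} + L_{n,2}E_{n+1,2} + E_{n,1}L_{n-1,1} + E_{n,2}L_{n-1,2},
  for n \<ge> 0; for n = 0 the last two terms are E_{0,i} L_{-1,i} = 0 (a 1 x 1 zero
  matrix since E_{0,i} has n = 0 columns).  Vmat E1 E2 (n+1) = V_{n+1}.\<close>
definition Vmat :: "(nat \<Rightarrow> real mat) \<Rightarrow> (nat \<Rightarrow> real mat) \<Rightarrow> nat \<Rightarrow> real mat" where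
  "Vmat E1 E2 m = (let n = m - 1 in
     L1 n * E1 (n + 1) + L2 n * E2 (n + 1) +
     (if n = 0 then 0\<^sub>m 1 1 else E1 n * L1 (n - 1) + E2 n * L2 (n - 1)))"

end

theory Submission
  imports Defs "Jordan_Normal_Form.Determinant"
begin

text \<open>Write \<open>E\<^sub>n = E\<^sub>n\<^sub>,\<^sub>1 + E\<^sub>n\<^sub>,\<^sub>2\<close> and \<open>H\<^sub>m(t)\<close> for the Gram matrix of \<open>Q\<^sub>m(t)\<close>. Adding the two
  three term relations and pairing with \<open>Q\<^sub>m(t)\<close> in the inner product at \<open>t\<close> expresses
  \<open>E\<^sub>m\<^sub>+\<^sub>1(s) H\<^sub>m(t)\<close> through inner products \<open>(Q\<^sub>N(s), P)\<^sub>t\<close> with \<open>deg P < N\<close>. Since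
  \<open>(Q\<^sub>N(s), P)\<^sub>s = 0\<close>, the derivative of such a term at \<open>s = t\<close> is \<open>- ((x\<^sup>2 + y\<^sup>2) Q\<^sub>N(t), P)\<^sub>t\<close>;
  this is justified without knowing that the coefficients of \<open>Q\<^sub>N(s)\<close> depend smoothly on \<open>s\<close>,
  by the energy estimate \<open>\<parallel>Q\<^sub>N(s) - Q\<^sub>N(t)\<parallel> = O(\<bar>s - t\<bar>)\<close>. The three term relations
  identify the moment matrix \<open>((x\<^sup>2 + y\<^sup>2) Q\<^sub>N, Q\<^sub>N\<^sup>T)\<close> with \<open>V\<^sub>N\<^sub>+\<^sub>1 H\<^sub>N\<close>, which turns the
  derivative into \<open>(V\<^sub>m\<^sub>+\<^sub>2 E\<^sub>m\<^sub>+\<^sub>1 - E\<^sub>m\<^sub>+\<^sub>1 V\<^sub>m\<^sub>+\<^sub>1) H\<^sub>m(t)\<close>; finally \<open>H\<^sub>m(t)\<close> is positive definite,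
  hence invertible.\<close>

section \<open>Elementary estimates\<close>

lemma abs_exp_minus_one_le:
  fixes z :: real shows "\<bar>exp z - 1\<bar> \<le> \<bar>z\<bar> * exp \<bar>z\<bar>"
proof -
  obtain u where u: "\<bar>u\<bar> \<le> \<bar>z\<bar>" "exp z = 1 + exp u * z"
    using Maclaurin_exp_le[of z 1] by auto
  have "\<bar>exp u * z\<bar> \<le> exp \<bar>z\<bar> * \<bar>z\<bar>"
    unfolding abs_mult using u(1) by (intro mult_right_mono) auto
  thus ?thesis using u(2) by (simp add: mult.commute)
qed

lemma abs_exp_minus_one_minus_le:
  fixes z :: real shows "\<bar>exp z - 1 - z\<bar> \<le> z\<^sup>2 * exp \<bar>z\<bar>"
proof -
  obtain u where u: "\<bar>u\<bar> \<le> \<bar>z\<bar>" "exp z = 1 + z + exp u / 2 * z\<^sup>2"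
    using Maclaurin_exp_le[of z 2] by (auto simp: numeral_2_eq_2)
  have "exp u / 2 \<le> exp \<bar>z\<bar>"
    using u(1) exp_gt_zero[of u] exp_le_cancel_iff[of u "\<bar>z\<bar>"] by linarith
  then have "\<bar>exp u / 2 * z\<^sup>2\<bar> \<le> exp \<bar>z\<bar> * z\<^sup>2"
    by (simp only: abs_mult abs_divide abs_exp_cancel abs_power2 abs_numeral) (rule mult_right_mono, auto)
  thus ?thesis using u(2) by (simp add: mult.commute)
qed

lemma has_real_derivative_if_quadratic_remainder:
  fixes \<phi> :: "real \<Rightarrow> real"
  assumes "\<And>s. \<bar>s - t\<bar> \<le> 1 \<Longrightarrow> \<bar>\<phi> s - \<phi> t - (s - t) * L\<bar> \<le> C * (s - t)\<^sup>2"
  shows "(\<phi> has_real_derivative L) (at t)"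
  unfolding has_field_derivative_iff Lim_null[where l = L]
proof (rule Lim_null_comparison)
  have "\<bar>(\<phi> s - \<phi> t) / (s - t) - L\<bar> \<le> C * \<bar>s - t\<bar>" if "s \<noteq> t" "\<bar>s - t\<bar> < 1" for s
  proof -
    have "\<bar>(\<phi> s - \<phi> t) / (s - t) - L\<bar> = \<bar>\<phi> s - \<phi> t - (s - t) * L\<bar> / \<bar>s - t\<bar>"
      using that(1) by (simp add: field_simps flip: abs_divide)
    also have "\<dots> \<le> C * (s - t)\<^sup>2 / \<bar>s - t\<bar>"
      using assms[of s] that by (simp add: divide_right_mono)
    also have "\<dots> = C * \<bar>s - t\<bar>"
      using that(1) by (simp add: power2_eq_square abs_mult_self_eq[symmetric, of "s - t"] del: abs_mult_self_eq)
    finally show ?thesis .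
  qed
  then show "\<forall>\<^sub>F s in at t. norm ((\<phi> s - \<phi> t) / (s - t) - L) \<le> C * \<bar>s - t\<bar>"
    unfolding eventually_at by (intro exI[of _ 1]) (auto simp: dist_real_def)
  show "((\<lambda>s. C * \<bar>s - t\<bar>) \<longlongrightarrow> 0) (at t)"
    by (rule tendsto_eq_intros refl | simp)+
qed

lemma pos_def_right_inverse:
  fixes H :: "nat \<Rightarrow> nat \<Rightarrow> real"
  assumes pos_def: "\<And>v. (\<exists>k<n. v k \<noteq> 0) \<Longrightarrow> (\<Sum>k<n. \<Sum>l<n. v k * v l * H k l) > 0"
  shows "\<exists>B. \<forall>a<n. \<forall>b<n. (\<Sum>l<n. H a l * B l b) = (if a = b then 1 else 0)"
proof -
  define A where "A = mat n n (\<lambda>(k, l). H k l)"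
  have A: "A \<in> carrier_mat n n" unfolding A_def by simp
  have "det A \<noteq> 0"
  proof
    assume "det A = 0"
    then obtain v where v: "v \<in> carrier_vec n" "v \<noteq> 0\<^sub>v n" "A *\<^sub>v v = 0\<^sub>v n"
      using det_0_iff_vec_prod_zero[OF A] by auto
    have "\<exists>k<n. v $ k \<noteq> 0" using v(1,2) by (metis eq_vecI carrier_vecD index_zero_vec(1,2))
    then have pos: "(\<Sum>k<n. \<Sum>l<n. v $ k * v $ l * H k l) > 0" using pos_def[of "\<lambda>k. v $ k"] by simp
    have row: "(\<Sum>l<n. H k l * v $ l) = 0" if "k < n" for k
      using arg_cong[OF v(3), of "\<lambda>w. w $ k"] that v(1)
      by (simp add: A_def scalar_prod_def lessThan_atLeast0)
    have "(\<Sum>k<n. \<Sum>l<n. v $ k * v $ l * H k l) = 0"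
      using row by (simp add: mult.assoc flip: sum_distrib_left) (simp add: mult.commute)
    with pos show False by simp
  qed
  then obtain B where B: "B \<in> carrier_mat n n" "A * B = 1\<^sub>m n"
    using det_non_zero_imp_unit[OF A] by (auto simp: Units_def ring_mat_def)
  show ?thesis
  proof (intro exI[of _ "\<lambda>l b. B $$ (l, b)"] allI impI)
    fix a b assume ab: "a < n" "b < n"
    have "(A * B) $$ (a, b) = (if a = b then 1 else 0)" using B ab by simp
    thus "(\<Sum>l<n. H a l * B $$ (l, b)) = (if a = b then 1 else 0)"
      using ab B by (simp add: A_def scalar_prod_def lessThan_atLeast0)
  qed
qed

lemma sum_swap_mult:
  "(\<Sum>l\<in>L. (\<Sum>p\<in>P. (a p :: 'a :: comm_semiring_0) * e p l) * h l) = (\<Sum>p\<in>P. a p * (\<Sum>l\<in>L. e p l * h l))"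
  by (simp add: sum_distrib_left sum_distrib_right mult.assoc sum.swap[of _ L])

lemma has_real_derivative_cancel_pos_def:
  fixes H :: "nat \<Rightarrow> nat \<Rightarrow> real" and e r :: "real \<Rightarrow> nat \<Rightarrow> real" and d :: "nat \<Rightarrow> real"
  assumes pos_def: "\<And>v. (\<exists>k<n. v k \<noteq> 0) \<Longrightarrow> (\<Sum>k<n. \<Sum>l<n. v k * v l * H k l) > 0"
    and factor: "\<And>s k. k < n \<Longrightarrow> (\<Sum>l<n. e s l * H l k) = r s k"
    and deriv: "\<And>k. k < n \<Longrightarrow> ((\<lambda>s. r s k) has_real_derivative (\<Sum>l<n. d l * H l k)) (at t)"
    and j: "j < n"
  shows "((\<lambda>s. e s j) has_real_derivative d j) (at t)"
proof -
  obtain B where B: "\<And>a b. a < n \<Longrightarrow> b < n \<Longrightarrow> (\<Sum>l<n. H a l * B l b) = (if a = b then 1 else 0)"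
    using pos_def_right_inverse[OF pos_def] by blast
  have contract: "(\<Sum>k<n. (\<Sum>l<n. f l * H l k) * B k j) = f j" for f
  proof -
    have "(\<Sum>k<n. (\<Sum>l<n. f l * H l k) * B k j) = (\<Sum>l<n. f l * (\<Sum>k<n. H l k * B k j))"
      by (rule sum_swap_mult)
    also have "\<dots> = (\<Sum>l<n. if l = j then f l else 0)"
      using B j by (intro sum.cong) auto
    also have "\<dots> = f j" using j by simp
    finally show ?thesis .
  qed
  have "e s j = (\<Sum>k<n. r s k * B k j)" for s
    using contract[of "e s"] factor by simp
  moreover have "((\<lambda>s. \<Sum>k<n. r s k * B k j) has_real_derivative
      (\<Sum>k<n. (\<Sum>l<n. d l * H l k) * B k j)) (at t)"
    by (intro DERIV_sum DERIV_cmult_right deriv) simp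
  ultimately show ?thesis using contract[of d] by simp
qed

section \<open>Gaussian growth and polynomials of bounded degree\<close>

definition gaussian_growth :: "(real \<Rightarrow> real \<Rightarrow> real) \<Rightarrow> bool" where
  "gaussian_growth f \<longleftrightarrow> (\<lambda>p. f (fst p) (snd p)) \<in> borel_measurable lborel \<and>
     (\<exists>C K. \<forall>x y. \<bar>f x y\<bar> \<le> C * exp (K * (x\<^sup>2 + y\<^sup>2)))"

lemma gaussian_growthI:
  assumes "(\<lambda>p. f (fst p) (snd p)) \<in> borel_measurable lborel"
    and "\<And>x y. \<bar>f x y\<bar> \<le> C * exp (K * (x\<^sup>2 + y\<^sup>2))"
  shows "gaussian_growth f"
  using assms unfolding gaussian_growth_def by blast

lemma gaussian_growthE:
  assumes "gaussian_growth f"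
  obtains C K where "C \<ge> 0" "\<And>x y. \<bar>f x y\<bar> \<le> C * exp (K * (x\<^sup>2 + y\<^sup>2))"
proof -
  obtain C K where b: "\<And>x y. \<bar>f x y\<bar> \<le> C * exp (K * (x\<^sup>2 + y\<^sup>2))"
    using assms unfolding gaussian_growth_def by blast
  have "0 \<le> C * exp (K * (0\<^sup>2 + 0\<^sup>2))"
    using b[of 0 0] by (rule order_trans[OF abs_ge_zero])
  then have "C \<ge> 0" by (simp add: zero_le_mult_iff)
  then show ?thesis using b by (rule that)
qed

lemma gaussian_growth_measurable:
  "gaussian_growth f \<Longrightarrow> (\<lambda>p. f (fst p) (snd p)) \<in> borel_measurable lborel"
  unfolding gaussian_growth_def by blast

lemma gaussian_growth_const: "gaussian_growth (\<lambda>x y. c)"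
  by (rule gaussian_growthI[where C = "\<bar>c\<bar>" and K = 0]) auto

lemma abs_le_exp_square: "\<bar>x :: real\<bar> \<le> exp (x\<^sup>2)"
proof -
  have "2 * \<bar>x\<bar> \<le> 1 + x\<^sup>2"
    using zero_le_power2[of "\<bar>x\<bar> - 1"] by (simp add: power2_eq_square algebra_simps)
  then show ?thesis using exp_ge_add_one_self[of "x\<^sup>2"] abs_ge_zero[of x] by linarith
qed

lemma gaussian_growth_x: "gaussian_growth (\<lambda>x y. x)"
proof (rule gaussian_growthI[where C = 1 and K = 1])
  fix x y :: real
  show "\<bar>x\<bar> \<le> 1 * exp (1 * (x\<^sup>2 + y\<^sup>2))"
    by (rule order_trans[OF abs_le_exp_square]) simp
qed (simp add: borel_measurable_continuous_onI continuous_intros)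

lemma gaussian_growth_y: "gaussian_growth (\<lambda>x y. y)"
proof (rule gaussian_growthI[where C = 1 and K = 1])
  fix x y :: real
  show "\<bar>y\<bar> \<le> 1 * exp (1 * (x\<^sup>2 + y\<^sup>2))"
    by (rule order_trans[OF abs_le_exp_square]) simp
qed (simp add: borel_measurable_continuous_onI continuous_intros)

lemma gaussian_growth_add:
  assumes "gaussian_growth f" "gaussian_growth g"
  shows "gaussian_growth (\<lambda>x y. f x y + g x y)"
proof -
  obtain C1 K1 where "C1 \<ge> 0" and f: "\<And>x y. \<bar>f x y\<bar> \<le> C1 * exp (K1 * (x\<^sup>2 + y\<^sup>2))"
    using gaussian_growthE[OF assms(1)] by blast
  obtain C2 K2 where "C2 \<ge> 0" and g: "\<And>x y. \<bar>g x y\<bar> \<le> C2 * exp (K2 * (x\<^sup>2 + y\<^sup>2))"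
    using gaussian_growthE[OF assms(2)] by blast
  have exp_le_max: "exp (K * (x\<^sup>2 + y\<^sup>2)) \<le> exp (max K1 K2 * (x\<^sup>2 + y\<^sup>2))"
    if "K \<le> max K1 K2" for K x y :: real
    using that by (simp add: mult_right_mono)
  show ?thesis
  proof (rule gaussian_growthI[where C = "C1 + C2" and K = "max K1 K2"])
    show "(\<lambda>p. f (fst p) (snd p) + g (fst p) (snd p)) \<in> borel_measurable lborel"
      using assms by (intro borel_measurable_add gaussian_growth_measurable)
    fix x y
    have "C1 * exp (K1 * (x\<^sup>2 + y\<^sup>2)) \<le> C1 * exp (max K1 K2 * (x\<^sup>2 + y\<^sup>2))"
      "C2 * exp (K2 * (x\<^sup>2 + y\<^sup>2)) \<le> C2 * exp (max K1 K2 * (x\<^sup>2 + y\<^sup>2))"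
      using \<open>C1 \<ge> 0\<close> \<open>C2 \<ge> 0\<close> by (intro mult_left_mono exp_le_max; simp)+
    then show "\<bar>f x y + g x y\<bar> \<le> (C1 + C2) * exp (max K1 K2 * (x\<^sup>2 + y\<^sup>2))"
      using f[of x y] g[of x y] by (simp add: distrib_right)
  qed
qed

lemma gaussian_growth_mult:
  assumes "gaussian_growth f" "gaussian_growth g"
  shows "gaussian_growth (\<lambda>x y. f x y * g x y)"
proof -
  obtain C1 K1 where "C1 \<ge> 0" and f: "\<And>x y. \<bar>f x y\<bar> \<le> C1 * exp (K1 * (x\<^sup>2 + y\<^sup>2))"
    using gaussian_growthE[OF assms(1)] by blast
  obtain C2 K2 where "C2 \<ge> 0" and g: "\<And>x y. \<bar>g x y\<bar> \<le> C2 * exp (K2 * (x\<^sup>2 + y\<^sup>2))"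
    using gaussian_growthE[OF assms(2)] by blast
  show ?thesis
  proof (rule gaussian_growthI[where C = "C1 * C2" and K = "K1 + K2"])
    show "(\<lambda>p. f (fst p) (snd p) * g (fst p) (snd p)) \<in> borel_measurable lborel"
      using assms by (intro borel_measurable_times gaussian_growth_measurable)
    fix x y
    have "\<bar>f x y * g x y\<bar> \<le> (C1 * exp (K1 * (x\<^sup>2 + y\<^sup>2))) * (C2 * exp (K2 * (x\<^sup>2 + y\<^sup>2)))"
      unfolding abs_mult using f[of x y] g[of x y] by (intro mult_mono) auto
    then show "\<bar>f x y * g x y\<bar> \<le> C1 * C2 * exp ((K1 + K2) * (x\<^sup>2 + y\<^sup>2))"
      by (simp add: distrib_right exp_add algebra_simps)
  qed
qed

lemma gaussian_growth_abs: "gaussian_growth f \<Longrightarrow> gaussian_growth (\<lambda>x y. \<bar>f x y\<bar>)"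
  unfolding gaussian_growth_def by (auto intro: borel_measurable_abs)

lemma gaussian_growth_scale: "gaussian_growth f \<Longrightarrow> gaussian_growth (\<lambda>x y. c * f x y)"
  by (rule gaussian_growth_mult[OF gaussian_growth_const])

lemma gaussian_growth_diff:
  "gaussian_growth f \<Longrightarrow> gaussian_growth g \<Longrightarrow> gaussian_growth (\<lambda>x y. f x y - g x y)"
  using gaussian_growth_add[of f "\<lambda>x y. (- 1) * g x y"] gaussian_growth_scale[of g "- 1"] by simp

lemma gaussian_growth_power: "gaussian_growth f \<Longrightarrow> gaussian_growth (\<lambda>x y. f x y ^ k)"
  by (induction k) (simp_all add: gaussian_growth_const gaussian_growth_mult)

lemma gaussian_growth_sum:
  "finite I \<Longrightarrow> (\<And>i. i \<in> I \<Longrightarrow> gaussian_growth (f i)) \<Longrightarrow>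
    gaussian_growth (\<lambda>x y. \<Sum>i\<in>I. f i x y)"
  by (induction I rule: finite_induct) (simp_all add: gaussian_growth_const gaussian_growth_add)

lemma gaussian_growth_radius: "gaussian_growth (\<lambda>x y. x\<^sup>2 + y\<^sup>2)"
  by (intro gaussian_growth_add gaussian_growth_power gaussian_growth_x gaussian_growth_y)

lemma gaussian_growth_radius_mult:
  "gaussian_growth f \<Longrightarrow> gaussian_growth (\<lambda>x y. (x\<^sup>2 + y\<^sup>2) * f x y)"
  by (rule gaussian_growth_mult[OF gaussian_growth_radius])

lemma finite_degree_lt_pairs: "finite {(j, k). j + k < (n :: nat)}"
  by (rule finite_subset[of _ "{..<n} \<times> {..<n}"]) auto

lemma gaussian_growth_poly_deg_lt: "poly_deg_lt n p \<Longrightarrow> gaussian_growth p"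
proof -
  assume "poly_deg_lt n p"
  then obtain c where "p = (\<lambda>x y. \<Sum>(j, k) \<in> {(j, k). j + k < n}. c j k * x ^ j * y ^ k)"
    unfolding poly_deg_lt_def by blast
  then show "gaussian_growth p"
    by (simp add: case_prod_beta, intro gaussian_growth_sum finite_degree_lt_pairs
        gaussian_growth_mult gaussian_growth_const gaussian_growth_power gaussian_growth_x
        gaussian_growth_y)
qed

lemma poly_deg_lt_add:
  assumes "poly_deg_lt n f" "poly_deg_lt n g"
  shows "poly_deg_lt n (\<lambda>x y. f x y + g x y)"
proof -
  obtain c d where
    "f = (\<lambda>x y. \<Sum>(j, k) \<in> {(j, k). j + k < n}. c j k * x ^ j * y ^ k)"
    "g = (\<lambda>x y. \<Sum>(j, k) \<in> {(j, k). j + k < n}. d j k * x ^ j * y ^ k)"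
    using assms unfolding poly_deg_lt_def by blast
  then show ?thesis unfolding poly_deg_lt_def
    by (intro exI[of _ "\<lambda>j k. c j k + d j k"])
      (simp add: sum.distrib[symmetric] case_prod_beta algebra_simps)
qed

lemma poly_deg_lt_scale:
  assumes "poly_deg_lt n f"
  shows "poly_deg_lt n (\<lambda>x y. a * f x y)"
proof -
  obtain c where "f = (\<lambda>x y. \<Sum>(j, k) \<in> {(j, k). j + k < n}. c j k * x ^ j * y ^ k)"
    using assms unfolding poly_deg_lt_def by blast
  then show ?thesis unfolding poly_deg_lt_def
    by (intro exI[of _ "\<lambda>j k. a * c j k"]) (simp add: sum_distrib_left case_prod_beta mult.assoc)
qed

lemma poly_deg_lt_zero: "poly_deg_lt n (\<lambda>x y. 0)"
  unfolding poly_deg_lt_def by (intro exI[of _ "\<lambda>j k. 0"]) simp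

lemma poly_deg_lt_diff:
  "poly_deg_lt n f \<Longrightarrow> poly_deg_lt n g \<Longrightarrow> poly_deg_lt n (\<lambda>x y. f x y - g x y)"
  using poly_deg_lt_add[of n f "\<lambda>x y. (- 1) * g x y"] poly_deg_lt_scale[of n g "- 1"] by simp

lemma poly_deg_lt_sum:
  "finite I \<Longrightarrow> (\<And>i. i \<in> I \<Longrightarrow> poly_deg_lt n (f i)) \<Longrightarrow>
    poly_deg_lt n (\<lambda>x y. \<Sum>i\<in>I. f i x y)"
  by (induction I rule: finite_induct) (simp_all add: poly_deg_lt_zero poly_deg_lt_add)

lemma poly_deg_lt_mono:
  assumes "poly_deg_lt n f" "n \<le> m"
  shows "poly_deg_lt m f"
proof -
  obtain c where c: "f = (\<lambda>x y. \<Sum>(j, k) \<in> {(j, k). j + k < n}. c j k * x ^ j * y ^ k)"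
    using assms(1) unfolding poly_deg_lt_def by blast
  have "(\<Sum>(j, k) \<in> {(j, k). j + k < m}. (if j + k < n then c j k else 0) * x ^ j * y ^ k)
      = (\<Sum>(j, k) \<in> {(j, k). j + k < n}. c j k * x ^ j * y ^ k)" for x y :: real
    using assms(2) by (intro sum.mono_neutral_cong_right finite_degree_lt_pairs) (auto split: if_splits)
  then show ?thesis unfolding poly_deg_lt_def c
    by (intro exI[of _ "\<lambda>j k. if j + k < n then c j k else 0"]) simp
qed

lemma poly_deg_lt_monomial:
  assumes "a + b < n"
  shows "poly_deg_lt n (\<lambda>x y. x ^ a * y ^ b)"
  unfolding poly_deg_lt_def
proof (intro exI[of _ "\<lambda>j k. if j = a \<and> k = b then 1 else 0"] allI)
  fix x y :: real
  have "(\<Sum>(j, k) \<in> {(j, k). j + k < n}. (if j = a \<and> k = b then 1 else 0) * x ^ j * y ^ k)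
      = (\<Sum>p \<in> {(j, k). j + k < n}. if p = (a, b) then x ^ a * y ^ b else 0)"
    by (intro sum.cong) (auto split: if_splits)
  also have "\<dots> = x ^ a * y ^ b" using assms finite_degree_lt_pairs[of n] by (simp add: sum.delta)
  finally show "x ^ a * y ^ b
      = (\<Sum>(j, k) \<in> {(j, k). j + k < n}. (if j = a \<and> k = b then 1 else 0) * x ^ j * y ^ k)"
    by simp
qed

lemma poly_deg_lt_Suc_decomp:
  assumes "poly_deg_lt (Suc n) p"
  obtains low c where "poly_deg_lt n low"
    and "\<And>x y. p x y = low x y + (\<Sum>i\<le>n. c i * x ^ (n - i) * y ^ i)"
proof -
  obtain c where c: "\<And>x y. p x y = (\<Sum>(j, k) \<in> {(j, k). j + k < Suc n}. c j k * x ^ j * y ^ k)"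
    using assms unfolding poly_deg_lt_def by blast
  let ?S = "{(j, k). j + k < n}" and ?T = "(\<lambda>i. (n - i, i)) ` {..n}"
  have split: "{(j, k). j + k < Suc n} = ?S \<union> ?T"
  proof (intro equalityI subsetI)
    fix z assume "z \<in> {(j, k). j + k < Suc n}"
    then obtain j k where "z = (j, k)" "j + k < Suc n" by auto
    then show "z \<in> ?S \<union> ?T" by (cases "j + k < n") (auto intro!: image_eqI[of _ _ k])
  qed auto
  have inj: "inj_on (\<lambda>i. (n - i, i)) {..n}" by (intro inj_onI) auto
  define low where "low = (\<lambda>x y. \<Sum>(j, k) \<in> ?S. c j k * x ^ j * y ^ k)"
  show ?thesis
  proof (rule that)
    show "poly_deg_lt n low" unfolding poly_deg_lt_def low_def by blast
    fix x y :: real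
    have "p x y = low x y + (\<Sum>(j, k) \<in> ?T. c j k * x ^ j * y ^ k)"
      unfolding c split low_def by (rule sum.union_disjoint) (auto simp: finite_degree_lt_pairs)
    also have "(\<Sum>(j, k) \<in> ?T. c j k * x ^ j * y ^ k) = (\<Sum>i\<le>n. c (n - i) i * x ^ (n - i) * y ^ i)"
      by (subst sum.reindex[OF inj]) simp
    finally show "p x y = low x y + (\<Sum>i\<le>n. c (n - i) i * x ^ (n - i) * y ^ i)" .
  qed
qed

section \<open>The weights and their inner products\<close>

lemma amgm_geometric_weights:
  fixes u v w0 w1 w3 :: real
  assumes "w0 > 0" "w1\<^sup>2 = w0 * w3"
  shows "u * v * w1 \<le> u\<^sup>2 * w0 / 2 + v\<^sup>2 * w3 / 2"
proof -
  have "w0 * (u\<^sup>2 * w0 + v\<^sup>2 * w3 - 2 * u * v * w1) = (u * w0 - v * w1)\<^sup>2"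
    using assms(2) by (simp add: power2_eq_square algebra_simps)
  then have "u\<^sup>2 * w0 + v\<^sup>2 * w3 - 2 * u * v * w1 \<ge> 0"
    using assms(1) by (metis zero_le_power2 zero_le_mult_iff not_less)
  then show ?thesis by simp
qed

lemma W_shift: "W a40 a22 a04 s x y = W a40 a22 a04 t x y * exp ((s - t) * (x\<^sup>2 + y\<^sup>2))"
  unfolding W_def by (simp add: exp_add[symmetric] algebra_simps)

lemma W_pos: "W a40 a22 a04 s x y > 0"
  unfolding W_def by simp

lemma W_mono: "s \<le> s' \<Longrightarrow> W a40 a22 a04 s x y \<le> W a40 a22 a04 s' x y"
  unfolding W_def by (simp add: mult_right_mono)

lemma W_square:
  "(W a40 a22 a04 (t + 1) x y)\<^sup>2 = W a40 a22 a04 (t - 1) x y * W a40 a22 a04 (t + 3) x y"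
  unfolding W_def by (simp add: exp_add[symmetric] power2_eq_square[of "exp _"] algebra_simps)

lemma W_measurable: "(\<lambda>p. W a40 a22 a04 s (fst p) (snd p)) \<in> borel_measurable lborel"
  unfolding W_def by (simp add: borel_measurable_continuous_onI continuous_intros)

text \<open>For \<open>\<bar>s - t\<bar> \<le> 1\<close> the factor \<open>exp \<bar>(s - t) (x\<^sup>2 + y\<^sup>2)\<bar>\<close> of the remainder is
  absorbed by passing from the weight at \<open>t\<close> to the weight at \<open>t + 1\<close>.\<close>

lemma W_diff_bound:
  assumes "\<bar>s - t\<bar> \<le> 1"
  shows "\<bar>W a40 a22 a04 s x y - W a40 a22 a04 t x y\<bar>
    \<le> \<bar>s - t\<bar> * (x\<^sup>2 + y\<^sup>2) * W a40 a22 a04 (t + 1) x y"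
proof -
  define z where "z = (s - t) * (x\<^sup>2 + y\<^sup>2)"
  have z: "\<bar>z\<bar> = \<bar>s - t\<bar> * (x\<^sup>2 + y\<^sup>2)" "\<bar>z\<bar> \<le> x\<^sup>2 + y\<^sup>2"
    using assms by (auto simp: z_def abs_mult intro: mult_left_le_one_le)
  have "W a40 a22 a04 s x y - W a40 a22 a04 t x y = W a40 a22 a04 t x y * (exp z - 1)"
    by (subst W_shift[of _ _ _ s x y t]) (simp add: z_def algebra_simps)
  then have "\<bar>W a40 a22 a04 s x y - W a40 a22 a04 t x y\<bar> = W a40 a22 a04 t x y * \<bar>exp z - 1\<bar>"
    using W_pos[of a40 a22 a04 t x y] by (simp add: abs_mult)
  also have "\<dots> \<le> W a40 a22 a04 t x y * (\<bar>z\<bar> * exp (x\<^sup>2 + y\<^sup>2))"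
    using W_pos[of a40 a22 a04 t x y] z(2)
    by (intro mult_left_mono order_trans[OF abs_exp_minus_one_le]) auto
  also have "\<dots> = \<bar>s - t\<bar> * (x\<^sup>2 + y\<^sup>2) * W a40 a22 a04 (t + 1) x y"
    by (simp add: W_shift[of _ _ _ "t + 1" x y t] z(1))
  finally show ?thesis .
qed

lemma W_taylor_bound:
  assumes "\<bar>s - t\<bar> \<le> 1"
  shows "\<bar>W a40 a22 a04 s x y - W a40 a22 a04 t x y - (s - t) * (x\<^sup>2 + y\<^sup>2) * W a40 a22 a04 t x y\<bar>
    \<le> (s - t)\<^sup>2 * (x\<^sup>2 + y\<^sup>2)\<^sup>2 * W a40 a22 a04 (t + 1) x y"
proof -
  define z where "z = (s - t) * (x\<^sup>2 + y\<^sup>2)"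
  have z: "\<bar>z\<bar> \<le> x\<^sup>2 + y\<^sup>2"
    using assms by (auto simp: z_def abs_mult intro: mult_left_le_one_le)
  have "\<bar>W a40 a22 a04 s x y - W a40 a22 a04 t x y - (s - t) * (x\<^sup>2 + y\<^sup>2) * W a40 a22 a04 t x y\<bar>
      = W a40 a22 a04 t x y * \<bar>exp z - 1 - z\<bar>"
  proof -
    have "W a40 a22 a04 s x y - W a40 a22 a04 t x y - (s - t) * (x\<^sup>2 + y\<^sup>2) * W a40 a22 a04 t x y
        = W a40 a22 a04 t x y * (exp z - 1 - z)"
      by (subst W_shift[of _ _ _ s x y t]) (simp add: z_def algebra_simps)
    then show ?thesis using W_pos[of a40 a22 a04 t x y] by (simp add: abs_mult)
  qed
  also have "\<dots> \<le> W a40 a22 a04 t x y * (z\<^sup>2 * exp (x\<^sup>2 + y\<^sup>2))"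
    using W_pos[of a40 a22 a04 t x y] z
    by (intro mult_left_mono order_trans[OF abs_exp_minus_one_minus_le]) auto
  also have "\<dots> = (s - t)\<^sup>2 * (x\<^sup>2 + y\<^sup>2)\<^sup>2 * W a40 a22 a04 (t + 1) x y"
    by (simp add: W_shift[of _ _ _ "t + 1" x y t] z_def power_mult_distrib)
  finally show ?thesis .
qed

lemma W_amgm_bound:
  "\<bar>u\<bar> * (\<bar>s - t\<bar> * (x\<^sup>2 + y\<^sup>2) * \<bar>v\<bar>) * W a40 a22 a04 (t + 1) x y
    \<le> u * u * W a40 a22 a04 (t - 1) x y / 2
      + (s - t)\<^sup>2 / 2 * ((x\<^sup>2 + y\<^sup>2) * v * ((x\<^sup>2 + y\<^sup>2) * v) * W a40 a22 a04 (t + 3) x y)"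
proof -
  have "(\<bar>s - t\<bar> * (x\<^sup>2 + y\<^sup>2) * \<bar>v\<bar>)\<^sup>2 = (s - t)\<^sup>2 * ((x\<^sup>2 + y\<^sup>2) * v * ((x\<^sup>2 + y\<^sup>2) * v))"
    by (simp add: power_mult_distrib power2_eq_square mult_ac)
  moreover have "\<bar>u\<bar>\<^sup>2 = u * u" by (simp add: power2_eq_square)
  ultimately show ?thesis
    using amgm_geometric_weights[OF W_pos[of a40 a22 a04 "t - 1" x y] W_square[of a40 a22 a04 t x y],
        of "\<bar>u\<bar>" "\<bar>s - t\<bar> * (x\<^sup>2 + y\<^sup>2) * \<bar>v\<bar>"]
    by (simp add: mult_ac)
qed

locale integrable_weights =
  fixes a40 a22 a04 :: real
  assumes integrable_W: "\<And>s. integrable lborel (\<lambda>p. W a40 a22 a04 s (fst p) (snd p))"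
begin

abbreviation IP :: "real \<Rightarrow> (real \<Rightarrow> real \<Rightarrow> real) \<Rightarrow> (real \<Rightarrow> real \<Rightarrow> real) \<Rightarrow> real" where
  "IP s \<equiv> ip a40 a22 a04 s"

lemma integrable_weighted:
  assumes "gaussian_growth f"
  shows "integrable lborel (\<lambda>p. f (fst p) (snd p) * W a40 a22 a04 s (fst p) (snd p))"
proof -
  obtain C K where "C \<ge> 0" and f: "\<And>x y. \<bar>f x y\<bar> \<le> C * exp (K * (x\<^sup>2 + y\<^sup>2))"
    using gaussian_growthE[OF assms] by blast
  show ?thesis
  proof (rule Bochner_Integration.integrable_bound)
    show "integrable lborel (\<lambda>p. C * W a40 a22 a04 (s + K) (fst p) (snd p))"
      using integrable_W by simp
    show "(\<lambda>p. f (fst p) (snd p) * W a40 a22 a04 s (fst p) (snd p)) \<in> borel_measurable lborel"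
      by (rule borel_measurable_times[OF gaussian_growth_measurable[OF assms] W_measurable])
    have "\<bar>f x y\<bar> * W a40 a22 a04 s x y \<le> C * W a40 a22 a04 (s + K) x y" for x y
      using mult_right_mono[OF f[of x y] less_imp_le[OF W_pos[of a40 a22 a04 s x y]]]
      by (simp add: W_shift[of _ _ _ "s + K" x y s] mult_ac)
    then show "AE p in lborel. norm (f (fst p) (snd p) * W a40 a22 a04 s (fst p) (snd p))
        \<le> norm (C * W a40 a22 a04 (s + K) (fst p) (snd p))"
      using \<open>C \<ge> 0\<close> by (intro AE_I2) (simp add: abs_mult abs_of_pos[OF W_pos])
  qed
qed

lemma integrable_ip:
  "gaussian_growth f \<Longrightarrow> gaussian_growth g \<Longrightarrow>
    integrable lborel (\<lambda>p. f (fst p) (snd p) * g (fst p) (snd p) * W a40 a22 a04 s (fst p) (snd p))"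
  using integrable_weighted[OF gaussian_growth_mult, of f g s] by simp

lemma ip_commute: "IP s f g = IP s g f"
  unfolding ip_def by (simp add: mult.commute mult.left_commute)

lemma ip_mult_swap: "IP s (\<lambda>x y. m x y * f x y) g = IP s f (\<lambda>x y. m x y * g x y)"
  unfolding ip_def by (simp add: mult.commute mult.left_commute)

lemma ip_scale_left: "IP s (\<lambda>x y. c * f x y) g = c * IP s f g"
  unfolding ip_def by (simp add: mult.assoc)

lemma ip_add_left:
  "gaussian_growth f \<Longrightarrow> gaussian_growth f' \<Longrightarrow> gaussian_growth g \<Longrightarrow>
    IP s (\<lambda>x y. f x y + f' x y) g = IP s f g + IP s f' g"
  unfolding ip_def by (simp add: distrib_right integrable_ip)

lemma ip_diff_left:
  "gaussian_growth f \<Longrightarrow> gaussian_growth f' \<Longrightarrow> gaussian_growth g \<Longrightarrow>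
    IP s (\<lambda>x y. f x y - f' x y) g = IP s f g - IP s f' g"
  unfolding ip_def by (simp add: left_diff_distrib integrable_ip)

lemma ip_add_right:
  "gaussian_growth g \<Longrightarrow> gaussian_growth g' \<Longrightarrow> gaussian_growth f \<Longrightarrow>
    IP s f (\<lambda>x y. g x y + g' x y) = IP s f g + IP s f g'"
  by (simp add: ip_commute[of s f] ip_add_left)

lemma ip_diff_right:
  "gaussian_growth g \<Longrightarrow> gaussian_growth g' \<Longrightarrow> gaussian_growth f \<Longrightarrow>
    IP s f (\<lambda>x y. g x y - g' x y) = IP s f g - IP s f g'"
  by (simp add: ip_commute[of s f] ip_diff_left)

lemma ip_sum_left:
  "(\<And>i. i \<in> I \<Longrightarrow> gaussian_growth (f i)) \<Longrightarrow> gaussian_growth g \<Longrightarrow>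
    IP s (\<lambda>x y. \<Sum>i\<in>I. f i x y) g = (\<Sum>i\<in>I. IP s (f i) g)"
  unfolding ip_def by (simp add: sum_distrib_right integral_sum integrable_ip)

lemma ip_lincomb_left:
  "(\<And>i. i \<in> I \<Longrightarrow> gaussian_growth (f i)) \<Longrightarrow> gaussian_growth g \<Longrightarrow>
    IP s (\<lambda>x y. \<Sum>i\<in>I. c i * f i x y) g = (\<Sum>i\<in>I. c i * IP s (f i) g)"
  by (simp add: ip_sum_left gaussian_growth_scale ip_scale_left)

lemma ip_mono_weight:
  assumes "gaussian_growth f" "s \<le> s'"
  shows "IP s f f \<le> IP s' f f"
  unfolding ip_def using assms W_mono[of s s' a40 a22 a04]
  by (intro integral_mono integrable_ip) (auto intro!: mult_left_mono)

lemma ip_taylor_remainder: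
  assumes f: "gaussian_growth f" and g: "gaussian_growth g"
  shows "\<exists>C. \<forall>s. \<bar>s - t\<bar> \<le> 1 \<longrightarrow>
    \<bar>IP s f g - IP t f g - (s - t) * IP t (\<lambda>x y. (x\<^sup>2 + y\<^sup>2) * f x y) g\<bar> \<le> C * (s - t)\<^sup>2"
proof (intro exI allI impI)
  let ?w = "\<lambda>s p. W a40 a22 a04 s (fst p) (snd p)"
  let ?fg = "\<lambda>p. f (fst p) (snd p) * g (fst p) (snd p)"
  let ?r = "\<lambda>p. (fst p)\<^sup>2 + (snd p)\<^sup>2"
  fix s assume st: "\<bar>s - t\<bar> \<le> 1"
  have int: "integrable lborel (\<lambda>p. ?fg p * ?w u p)" for u
    using integrable_ip[OF f g] by simp
  have int_r: "integrable lborel (\<lambda>p. ?fg p * (?r p * ?w t p))"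
    using integrable_ip[OF gaussian_growth_radius_mult[OF f] g, of t] by (simp add: ac_simps)
  have int_bound: "integrable lborel (\<lambda>p. \<bar>?fg p\<bar> * (?r p)\<^sup>2 * ?w (t + 1) p)"
    using integrable_weighted[of "\<lambda>x y. \<bar>f x y * g x y\<bar> * (x\<^sup>2 + y\<^sup>2)\<^sup>2"] f g
    by (simp add: gaussian_growth_abs gaussian_growth_mult gaussian_growth_power gaussian_growth_radius)
  have int_rem: "integrable lborel
      (\<lambda>p. ?fg p * ?w s p - ?fg p * ?w t p - (s - t) * (?fg p * (?r p * ?w t p)))"
    using int int_r by simp
  have rem: "(\<lambda>p. ?fg p * ?w s p - ?fg p * ?w t p - (s - t) * (?fg p * (?r p * ?w t p)))
      = (\<lambda>p. ?fg p * (?w s p - ?w t p - (s - t) * ?r p * ?w t p))"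
    by (simp add: fun_eq_iff algebra_simps)
  have "IP s f g - IP t f g - (s - t) * IP t (\<lambda>x y. (x\<^sup>2 + y\<^sup>2) * f x y) g
      = integral\<^sup>L lborel (\<lambda>p. ?fg p * ?w s p - ?fg p * ?w t p - (s - t) * (?fg p * (?r p * ?w t p)))"
    using int int_r unfolding ip_def by (simp add: ac_simps)
  also have "\<dots> = integral\<^sup>L lborel (\<lambda>p. ?fg p * (?w s p - ?w t p - (s - t) * ?r p * ?w t p))"
    by (simp only: rem)
  finally have eq: "IP s f g - IP t f g - (s - t) * IP t (\<lambda>x y. (x\<^sup>2 + y\<^sup>2) * f x y) g = \<dots>" .
  have "\<bar>integral\<^sup>L lborel (\<lambda>p. ?fg p * (?w s p - ?w t p - (s - t) * ?r p * ?w t p))\<bar>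
      \<le> integral\<^sup>L lborel (\<lambda>p. (s - t)\<^sup>2 * (\<bar>?fg p\<bar> * (?r p)\<^sup>2 * ?w (t + 1) p))"
  proof (rule integral_abs_bound_integral)
    show "integrable lborel (\<lambda>p. ?fg p * (?w s p - ?w t p - (s - t) * ?r p * ?w t p))"
      using int_rem by (simp only: rem)
    show "integrable lborel (\<lambda>p. (s - t)\<^sup>2 * (\<bar>?fg p\<bar> * (?r p)\<^sup>2 * ?w (t + 1) p))"
      using int_bound by simp
    fix p :: "real \<times> real"
    show "\<bar>?fg p * (?w s p - ?w t p - (s - t) * ?r p * ?w t p)\<bar>
        \<le> (s - t)\<^sup>2 * (\<bar>?fg p\<bar> * (?r p)\<^sup>2 * ?w (t + 1) p)"
      using mult_left_mono[OF W_taylor_bound[OF st, of a40 a22 a04 "fst p" "snd p"] abs_ge_zero[of "?fg p"]]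
      by (simp add: abs_mult mult_ac)
  qed
  then show "\<bar>IP s f g - IP t f g - (s - t) * IP t (\<lambda>x y. (x\<^sup>2 + y\<^sup>2) * f x y) g\<bar>
      \<le> integral\<^sup>L lborel (\<lambda>p. \<bar>?fg p\<bar> * (?r p)\<^sup>2 * ?w (t + 1) p) * (s - t)\<^sup>2"
    unfolding eq by (simp add: mult.commute)
qed

text \<open>By AM-GM with \<open>W(t + 1)\<^sup>2 = W(t - 1) W(t + 3)\<close>, the change of \<open>(D, P)\<^sub>s\<close> is controlled
  by the norm of \<open>D\<close> itself plus an error of order \<open>(s - t)\<^sup>2\<close>.\<close>

lemma ip_weight_diff_bound:
  assumes D: "gaussian_growth D" and P: "gaussian_growth P" and st: "\<bar>s - t\<bar> \<le> 1"
  shows "\<bar>IP s D P - IP t D P\<bar> \<le> IP (t - 1) D D / 2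
     + (s - t)\<^sup>2 / 2 * IP (t + 3) (\<lambda>x y. (x\<^sup>2 + y\<^sup>2) * P x y) (\<lambda>x y. (x\<^sup>2 + y\<^sup>2) * P x y)"
proof -
  let ?w = "\<lambda>s p. W a40 a22 a04 s (fst p) (snd p)"
  let ?D = "\<lambda>p. D (fst p) (snd p)" and ?P = "\<lambda>p. P (fst p) (snd p)"
  let ?r = "\<lambda>p. (fst p)\<^sup>2 + (snd p)\<^sup>2"
  let ?rP = "\<lambda>x y. (x\<^sup>2 + y\<^sup>2) * P x y"
  have int_mid: "integrable lborel (\<lambda>p. \<bar>?D p\<bar> * (\<bar>s - t\<bar> * ?r p * \<bar>?P p\<bar>) * ?w (t + 1) p)"
    using integrable_weighted[of "\<lambda>x y. \<bar>D x y\<bar> * (\<bar>s - t\<bar> * (x\<^sup>2 + y\<^sup>2) * \<bar>P x y\<bar>)"] D P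
    by (simp add: gaussian_growth_abs gaussian_growth_mult gaussian_growth_const gaussian_growth_radius)
  have int_D: "integrable lborel (\<lambda>p. ?D p * ?D p * ?w (t - 1) p)"
    using integrable_ip[OF D D] by simp
  have int_P: "integrable lborel (\<lambda>p. ?rP (fst p) (snd p) * ?rP (fst p) (snd p) * ?w (t + 3) p)"
    using integrable_ip[OF gaussian_growth_radius_mult[OF P] gaussian_growth_radius_mult[OF P]] by simp
  have "\<bar>IP s D P - IP t D P\<bar> = \<bar>integral\<^sup>L lborel (\<lambda>p. ?D p * ?P p * (?w s p - ?w t p))\<bar>"
    using integrable_ip[OF D P] unfolding ip_def by (simp add: right_diff_distrib)
  also have "\<dots> \<le> integral\<^sup>L lborel (\<lambda>p. \<bar>?D p\<bar> * (\<bar>s - t\<bar> * ?r p * \<bar>?P p\<bar>) * ?w (t + 1) p)"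
  proof (rule integral_abs_bound_integral[OF _ int_mid])
    show "integrable lborel (\<lambda>p. ?D p * ?P p * (?w s p - ?w t p))"
      using integrable_ip[OF D P, of s] integrable_ip[OF D P, of t] by (simp add: right_diff_distrib)
    fix p :: "real \<times> real"
    show "\<bar>?D p * ?P p * (?w s p - ?w t p)\<bar> \<le> \<bar>?D p\<bar> * (\<bar>s - t\<bar> * ?r p * \<bar>?P p\<bar>) * ?w (t + 1) p"
      using mult_left_mono[OF W_diff_bound[OF st, of a40 a22 a04 "fst p" "snd p"],
          of "\<bar>?D p\<bar> * \<bar>?P p\<bar>"]
      by (simp add: abs_mult mult_ac flip: right_diff_distrib)
  qed
  also have "\<dots> \<le> integral\<^sup>L lborel (\<lambda>p. ?D p * ?D p * ?w (t - 1) p / 2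
      + (s - t)\<^sup>2 / 2 * (?rP (fst p) (snd p) * ?rP (fst p) (snd p) * ?w (t + 3) p))"
  proof (rule integral_mono[OF int_mid])
    show "integrable lborel (\<lambda>p. ?D p * ?D p * ?w (t - 1) p / 2
        + (s - t)\<^sup>2 / 2 * (?rP (fst p) (snd p) * ?rP (fst p) (snd p) * ?w (t + 3) p))"
      using int_D int_P by simp
    fix p :: "real \<times> real"
    show "\<bar>?D p\<bar> * (\<bar>s - t\<bar> * ?r p * \<bar>?P p\<bar>) * ?w (t + 1) p \<le> ?D p * ?D p * ?w (t - 1) p / 2
        + (s - t)\<^sup>2 / 2 * (?rP (fst p) (snd p) * ?rP (fst p) (snd p) * ?w (t + 3) p)"
      by (rule W_amgm_bound)
  qed
  also have "\<dots> = IP (t - 1) D D / 2 + (s - t)\<^sup>2 / 2 * IP (t + 3) ?rP ?rP"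
    using int_D int_P unfolding ip_def by simp
  finally show ?thesis .
qed

end

section \<open>Monic orthogonal polynomial systems\<close>

locale monic_ops_family =
  fixes a40 a22 a04 :: real and Q :: "real \<Rightarrow> nat \<Rightarrow> nat \<Rightarrow> real \<Rightarrow> real \<Rightarrow> real"
  assumes monic_OPS: "\<And>s. monic_OPS a40 a22 a04 s (Q s)"
begin

lemma Q_monic: "i \<le> n \<Longrightarrow> poly_deg_lt n (\<lambda>x y. Q s n i x y - x ^ (n - i) * y ^ i)"
  using monic_OPS[of s] unfolding monic_OPS_def by blast

lemma Q_orthogonal:
  "n \<noteq> m \<Longrightarrow> i \<le> n \<Longrightarrow> j \<le> m \<Longrightarrow> ip a40 a22 a04 s (Q s n i) (Q s m j) = 0"
  using monic_OPS[of s] unfolding monic_OPS_def by blast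

lemma gram_pos_def:
  "(\<exists>i\<le>n. v i \<noteq> 0) \<Longrightarrow> (\<Sum>i\<le>n. \<Sum>j\<le>n. v i * v j * ip a40 a22 a04 s (Q s n i) (Q s n j)) > 0"
  using monic_OPS[of s] unfolding monic_OPS_def by blast

lemma Q_zero: "Q s 0 0 x y = 1"
proof -
  have "{(j, k). j + k < (0 :: nat)} = {}" by auto
  then show ?thesis using Q_monic[of 0 0 s] unfolding poly_deg_lt_def by auto
qed

text \<open>No integrability assumption on the weights is needed: \<open>(Q\<^sub>0\<^sub>0, Q\<^sub>0\<^sub>0)\<^sub>s\<close> is the integral
  of \<open>W(s)\<close> and is positive, whereas a non-integrable function has Bochner integral \<open>0\<close>.\<close>

lemma integrable_W: "integrable lborel (\<lambda>p. W a40 a22 a04 s (fst p) (snd p))"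
proof -
  have "ip a40 a22 a04 s (Q s 0 0) (Q s 0 0) \<noteq> 0"
    using gram_pos_def[of 0 "\<lambda>_. 1" s] by simp
  then show ?thesis
    unfolding ip_def Q_zero using not_integrable_integral_eq by fastforce
qed

sublocale integrable_weights a40 a22 a04
  by unfold_locales (rule integrable_W)

lemma poly_deg_lt_Q:
  assumes "j \<le> m"
  shows "poly_deg_lt (Suc m) (Q s m j)"
proof -
  have "poly_deg_lt (Suc m) (\<lambda>x y. (Q s m j x y - x ^ (m - j) * y ^ j) + x ^ (m - j) * y ^ j)"
    using assms by (intro poly_deg_lt_add poly_deg_lt_mono[OF Q_monic] poly_deg_lt_monomial) auto
  then show ?thesis by simp
qed

lemma gaussian_growth_Q: "j \<le> m \<Longrightarrow> gaussian_growth (Q s m j)"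
  by (rule gaussian_growth_poly_deg_lt[OF poly_deg_lt_Q])

lemma poly_deg_lt_Q_diff:
  assumes "j \<le> m"
  shows "poly_deg_lt m (\<lambda>x y. Q s m j x y - Q t m j x y)"
proof -
  have "poly_deg_lt m (\<lambda>x y. (Q s m j x y - x ^ (m - j) * y ^ j) - (Q t m j x y - x ^ (m - j) * y ^ j))"
    using assms by (intro poly_deg_lt_diff Q_monic)
  then show ?thesis by simp
qed

lemma poly_deg_lt_in_Q_span:
  "poly_deg_lt n p \<Longrightarrow> \<exists>c. \<forall>x y. p x y = (\<Sum>m<n. \<Sum>j\<le>m. c m j * Q s m j x y)"
proof (induction n arbitrary: p)
  case 0
  have "{(j, k). j + k < (0 :: nat)} = {}" by auto
  then show ?case using "0.prems" unfolding poly_deg_lt_def by auto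
next
  case (Suc n)
  obtain low c where low: "poly_deg_lt n low"
    and p: "\<And>x y. p x y = low x y + (\<Sum>i\<le>n. c i * x ^ (n - i) * y ^ i)"
    using poly_deg_lt_Suc_decomp[OF Suc.prems] by blast
  define g where "g = (\<lambda>x y. low x y - (\<Sum>i\<le>n. c i * (Q s n i x y - x ^ (n - i) * y ^ i)))"
  have "poly_deg_lt n g"
    unfolding g_def by (intro poly_deg_lt_diff low poly_deg_lt_sum poly_deg_lt_scale Q_monic) auto
  then obtain d where d: "\<And>x y. g x y = (\<Sum>m<n. \<Sum>j\<le>m. d m j * Q s m j x y)"
    using Suc.IH by blast
  have "p x y = g x y + (\<Sum>i\<le>n. c i * Q s n i x y)" for x y
    by (simp add: p g_def algebra_simps sum_subtractf sum.distrib)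
  then have "p x y = (\<Sum>m<Suc n. \<Sum>j\<le>m. (if m = n then c j else d m j) * Q s m j x y)" for x y
    by (simp add: d)
  then show ?case by (intro exI[of _ "\<lambda>m j. if m = n then c j else d m j"]) blast
qed

lemma ip_Q_poly_deg_lt:
  assumes "poly_deg_lt n p" "i \<le> n"
  shows "IP s (Q s n i) p = 0"
proof -
  obtain c where "p = (\<lambda>x y. \<Sum>m<n. \<Sum>j\<le>m. c m j * Q s m j x y)"
    using poly_deg_lt_in_Q_span[OF assms(1)] by blast
  then have "IP s p (Q s n i) = (\<Sum>m<n. IP s (\<lambda>x y. \<Sum>j\<le>m. c m j * Q s m j x y) (Q s n i))"
    using assms(2) by (simp, intro ip_sum_left)
      (auto intro!: gaussian_growth_sum gaussian_growth_scale gaussian_growth_Q)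
  also have "\<dots> = (\<Sum>m<n. \<Sum>j\<le>m. c m j * IP s (Q s m j) (Q s n i))"
    using assms(2) by (intro sum.cong refl ip_lincomb_left) (auto intro: gaussian_growth_Q)
  also have "\<dots> = 0"
    using assms(2) by (intro sum.neutral ballI) (auto simp: Q_orthogonal)
  finally show ?thesis by (simp add: ip_commute)
qed

lemma ip_Q_cross:
  assumes "l \<le> N" "j \<le> N"
  shows "IP t (Q s N l) (Q t N j) = IP t (Q t N l) (Q t N j)"
proof -
  let ?D = "\<lambda>x y. Q s N l x y - Q t N l x y"
  have "IP t (Q s N l) (Q t N j) = IP t (\<lambda>x y. Q t N l x y + ?D x y) (Q t N j)"
    by simp
  also have "\<dots> = IP t (Q t N l) (Q t N j) + IP t ?D (Q t N j)"
    using assms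
    by (intro ip_add_left gaussian_growth_Q gaussian_growth_poly_deg_lt[OF poly_deg_lt_Q_diff])
  also have "IP t ?D (Q t N j) = 0"
    using ip_Q_poly_deg_lt[OF poly_deg_lt_Q_diff assms(2)] assms by (simp add: ip_commute)
  finally show ?thesis by simp
qed

text \<open>The energy estimate, which replaces any differentiability of the coefficients of \<open>Q(s)\<close>:
  \<open>D = Q(s) - Q(t)\<close> has degree \<open>< N\<close>, so \<open>(D, D)\<^sub>s = - (Q(t), D)\<^sub>s = (Q(t), D)\<^sub>t - (Q(t), D)\<^sub>s\<close>.\<close>

lemma Q_energy_bound:
  assumes i: "i \<le> N" and st: "\<bar>s - t\<bar> \<le> 1"
  shows "IP (t - 1) (\<lambda>x y. Q s N i x y - Q t N i x y) (\<lambda>x y. Q s N i x y - Q t N i x y)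
     \<le> (s - t)\<^sup>2 * IP (t + 3) (\<lambda>x y. (x\<^sup>2 + y\<^sup>2) * Q t N i x y) (\<lambda>x y. (x\<^sup>2 + y\<^sup>2) * Q t N i x y)"
proof -
  define D where "D = (\<lambda>x y. Q s N i x y - Q t N i x y)"
  have pD: "poly_deg_lt N D" unfolding D_def using poly_deg_lt_Q_diff[OF i] .
  have gD: "gaussian_growth D" by (rule gaussian_growth_poly_deg_lt[OF pD])
  have "IP s D D = IP s (Q s N i) D - IP s (Q t N i) D"
    unfolding D_def using i gD by (simp add: ip_diff_left gaussian_growth_Q D_def)
  then have "IP s D D = IP t D (Q t N i) - IP s D (Q t N i)"
    using ip_Q_poly_deg_lt[OF pD i, of s] ip_Q_poly_deg_lt[OF pD i, of t] by (simp add: ip_commute)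
  also have "\<dots> \<le> IP (t - 1) D D / 2 + (s - t)\<^sup>2 / 2 *
      IP (t + 3) (\<lambda>x y. (x\<^sup>2 + y\<^sup>2) * Q t N i x y) (\<lambda>x y. (x\<^sup>2 + y\<^sup>2) * Q t N i x y)"
    using ip_weight_diff_bound[OF gD gaussian_growth_Q[OF i, of t] st] by linarith
  finally have "IP s D D \<le> \<dots>" .
  moreover have "IP (t - 1) D D \<le> IP s D D" using st by (intro ip_mono_weight gD) auto
  ultimately show ?thesis unfolding D_def by simp
qed

text \<open>Differentiating \<open>(Q(s), P)\<^sub>s = 0\<close> at \<open>s = t\<close> gives
  \<open>d/ds (Q(s), P)\<^sub>t = - d/ds (Q(t), P)\<^sub>s = - ((x\<^sup>2 + y\<^sup>2) Q(t), P)\<^sub>t\<close>; the Taylor remainder of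
  \<open>(Q(t), P)\<^sub>s\<close> is quadratic, and so is the change of \<open>(Q(s) - Q(t), P)\<close> by the energy estimate.\<close>

lemma has_real_derivative_ip_Q:
  assumes i: "i \<le> N" and P: "poly_deg_lt N P"
  shows "((\<lambda>s. IP t (Q s N i) P) has_real_derivative
    - IP t (\<lambda>x y. (x\<^sup>2 + y\<^sup>2) * Q t N i x y) P) (at t)"
proof -
  have gP: "gaussian_growth P" by (rule gaussian_growth_poly_deg_lt[OF P])
  have gt: "gaussian_growth (Q t N i)" by (rule gaussian_growth_Q[OF i])
  obtain K where taylor: "\<And>s. \<bar>s - t\<bar> \<le> 1 \<Longrightarrow>
      \<bar>IP s (Q t N i) P - IP t (Q t N i) P - (s - t) * IP t (\<lambda>x y. (x\<^sup>2 + y\<^sup>2) * Q t N i x y) P\<bar>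
      \<le> K * (s - t)\<^sup>2"
    using ip_taylor_remainder[OF gt gP] by blast
  define C0 where "C0 = IP (t + 3) (\<lambda>x y. (x\<^sup>2 + y\<^sup>2) * Q t N i x y) (\<lambda>x y. (x\<^sup>2 + y\<^sup>2) * Q t N i x y)"
  define C1 where "C1 = IP (t + 3) (\<lambda>x y. (x\<^sup>2 + y\<^sup>2) * P x y) (\<lambda>x y. (x\<^sup>2 + y\<^sup>2) * P x y)"
  show ?thesis
  proof (rule has_real_derivative_if_quadratic_remainder[where C = "K + C0 / 2 + C1 / 2"])
    fix s assume st: "\<bar>s - t\<bar> \<le> 1"
    define D where "D = (\<lambda>x y. Q s N i x y - Q t N i x y)"
    have pD: "poly_deg_lt N D" unfolding D_def by (rule poly_deg_lt_Q_diff[OF i])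
    have gD: "gaussian_growth D" by (rule gaussian_growth_poly_deg_lt[OF pD])
    have orth_t: "IP t (Q t N i) P = 0" and orth_s: "IP s (Q s N i) P = 0"
      by (rule ip_Q_poly_deg_lt[OF P i])+
    have "IP t (Q s N i) P = IP t D P"
      using orth_t gt gD gP by (simp add: D_def ip_diff_left gaussian_growth_Q[OF i])
    moreover have "IP s D P = - IP s (Q t N i) P"
      using orth_s gt gP by (simp add: D_def ip_diff_left gaussian_growth_Q[OF i])
    moreover have "\<bar>IP s D P - IP t D P\<bar> \<le> (s - t)\<^sup>2 * C0 / 2 + (s - t)\<^sup>2 / 2 * C1"
      using ip_weight_diff_bound[OF gD gP st] Q_energy_bound[OF i st]
      unfolding C0_def C1_def D_def by linarith
    ultimately show "\<bar>IP t (Q s N i) P - IP t (Q t N i) P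
        - (s - t) * - IP t (\<lambda>x y. (x\<^sup>2 + y\<^sup>2) * Q t N i x y) P\<bar> \<le> (K + C0 / 2 + C1 / 2) * (s - t)\<^sup>2"
      using taylor[OF st] orth_t by (simp add: algebra_simps)
  qed
qed

end

section \<open>Three term relations\<close>

lemma dim_L1 [simp]: "dim_row (L1 N) = Suc N" "dim_col (L1 N) = Suc (Suc N)"
  and dim_L2 [simp]: "dim_row (L2 N) = Suc N" "dim_col (L2 N) = Suc (Suc N)"
  unfolding L1_def L2_def by simp_all

lemma L1_carrier: "L1 N \<in> carrier_mat (Suc N) (Suc (Suc N))"
  and L2_carrier: "L2 N \<in> carrier_mat (Suc N) (Suc (Suc N))"
  unfolding L1_def L2_def by simp_all

lemma Vmat_carrier:
  assumes "\<And>k. E1 k \<in> carrier_mat (Suc k) k" "\<And>k. E2 k \<in> carrier_mat (Suc k) k"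
  shows "Vmat E1 E2 (Suc N) \<in> carrier_mat (Suc N) (Suc N)"
  using assms
  by (cases N) (auto simp: Vmat_def intro!: add_carrier_mat mult_carrier_mat[OF L1_carrier]
      mult_carrier_mat[OF L2_carrier] mult_carrier_mat[OF assms(1)] mult_carrier_mat[OF assms(2)])

lemma index_mult_mat_sum:
  "A \<in> carrier_mat r c \<Longrightarrow> B \<in> carrier_mat c d \<Longrightarrow> i < r \<Longrightarrow> l < d \<Longrightarrow>
    (A * B) $$ (i, l) = (\<Sum>k<c. A $$ (i, k) * B $$ (k, l))"
  by (simp add: scalar_prod_def lessThan_atLeast0)

lemma index_L1_mult:
  assumes "M \<in> carrier_mat (Suc (Suc N)) c" "i \<le> N" "p < c"
  shows "(L1 N * M) $$ (i, p) = M $$ (i, p)"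
proof -
  have "(L1 N * M) $$ (i, p) = (\<Sum>k<Suc (Suc N). (if k = i then 1 else 0) * M $$ (k, p))"
    using assms by (subst index_mult_mat_sum[OF L1_carrier assms(1)]) (simp_all add: L1_def)
  also have "\<dots> = M $$ (i, p)"
    using assms by (simp add: if_distrib[of "\<lambda>a. a * _"] cong: if_cong)
  finally show ?thesis .
qed

lemma index_L2_mult:
  assumes "M \<in> carrier_mat (Suc (Suc N)) c" "i \<le> N" "p < c"
  shows "(L2 N * M) $$ (i, p) = M $$ (Suc i, p)"
proof -
  have "(L2 N * M) $$ (i, p) = (\<Sum>k<Suc (Suc N). (if k = Suc i then 1 else 0) * M $$ (k, p))"
    using assms by (subst index_mult_mat_sum[OF L2_carrier assms(1)]) (simp_all add: L2_def)
  also have "\<dots> = M $$ (Suc i, p)"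
    using assms by (simp add: if_distrib[of "\<lambda>a. a * _"] cong: if_cong)
  finally show ?thesis .
qed

lemma index_mult_L1:
  assumes "M \<in> carrier_mat r (Suc N)" "i < r" "p \<le> Suc N"
  shows "(M * L1 N) $$ (i, p) = (if p \<le> N then M $$ (i, p) else 0)"
proof -
  have "(M * L1 N) $$ (i, p) = (\<Sum>k<Suc N. M $$ (i, k) * (if p = k then 1 else 0))"
    using assms by (subst index_mult_mat_sum[OF assms(1) L1_carrier]) (simp_all add: L1_def)
  also have "\<dots> = (if p \<le> N then M $$ (i, p) else 0)"
    by (simp add: if_distrib[of "\<lambda>a. _ * a"] cong: if_cong)
  finally show ?thesis .
qed

lemma index_mult_L2:
  assumes "M \<in> carrier_mat r (Suc N)" "i < r" "p \<le> Suc N"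
  shows "(M * L2 N) $$ (i, p) = (if 0 < p then M $$ (i, p - 1) else 0)"
proof -
  have "(M * L2 N) $$ (i, p) = (\<Sum>k<Suc N. M $$ (i, k) * (if p = Suc k then 1 else 0))"
    using assms by (subst index_mult_mat_sum[OF assms(1) L2_carrier]) (simp_all add: L2_def)
  also have "\<dots> = (\<Sum>k<Suc N. if k = p - 1 \<and> 0 < p then M $$ (i, k) else 0)"
    by (intro sum.cong) auto
  also have "\<dots> = (if 0 < p then M $$ (i, p - 1) else 0)"
    using assms(3) by (cases "0 < p") (auto simp: sum.delta')
  finally show ?thesis .
qed

lemma Vmat_index:
  assumes E1: "\<And>k. E1 k \<in> carrier_mat (Suc k) k" and E2: "\<And>k. E2 k \<in> carrier_mat (Suc k) k"
    and "i \<le> N" "p \<le> N"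
  shows "Vmat E1 E2 (Suc N) $$ (i, p) = E1 (Suc N) $$ (i, p) + E2 (Suc N) $$ (Suc i, p)
     + (if p < N then E1 N $$ (i, p) else 0) + (if 0 < p then E2 N $$ (i, p - 1) else 0)"
proof (cases N)
  case 0
  then show ?thesis
    using assms index_L1_mult[OF E1, of 0 0 0] index_L2_mult[OF E2, of 0 0 0]
      carrier_matD[OF E1[of 1]] carrier_matD[OF E2[of 1]]
    by (simp add: Vmat_def)
next
  case (Suc M)
  then have "Vmat E1 E2 (Suc N) = L1 N * E1 (Suc N) + L2 N * E2 (Suc N) + (E1 N * L1 M + E2 N * L2 M)"
    by (simp add: Vmat_def)
  then show ?thesis
    using assms Suc index_L1_mult[OF E1] index_L2_mult[OF E2] index_mult_L1[OF E1[of N, unfolded Suc]]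
      index_mult_L2[OF E2[of N, unfolded Suc]] carrier_matD[OF E1] carrier_matD[OF E2]
    by (simp add: less_Suc_eq_le)
qed

context monic_ops_family
begin

abbreviation gram :: "real \<Rightarrow> nat \<Rightarrow> nat \<Rightarrow> nat \<Rightarrow> real" where
  "gram s N a b \<equiv> IP s (Q s N a) (Q s N b)"

abbreviation moment :: "real \<Rightarrow> nat \<Rightarrow> nat \<Rightarrow> nat \<Rightarrow> real" where
  "moment s N a b \<equiv> IP s (\<lambda>x y. (x\<^sup>2 + y\<^sup>2) * Q s N a x y) (Q s N b)"

text \<open>One of the two three term relations, for the multiplier \<open>\<phi>\<close>: \<open>\<phi> = x, \<sigma> = 0\<close>
  encodes \<open>L\<^sub>n\<^sub>,\<^sub>1\<close> and \<open>\<phi> = y, \<sigma> = 1\<close> encodes \<open>L\<^sub>n\<^sub>,\<^sub>2\<close>, which select the entries \<open>i\<close>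
  resp. \<open>i + 1\<close> of \<open>Q\<^sub>n\<^sub>+\<^sub>1\<close>.\<close>

definition mult_recurrence ::
    "(real \<Rightarrow> real \<Rightarrow> real) \<Rightarrow> nat \<Rightarrow> real \<Rightarrow> (nat \<Rightarrow> real mat) \<Rightarrow> bool" where
  "mult_recurrence \<phi> \<sigma> s E \<longleftrightarrow> gaussian_growth \<phi> \<and> \<sigma> \<le> 1 \<and>
     (\<forall>n i x y. i \<le> n \<longrightarrow>
        \<phi> x y * Q s n i x y = Q s (Suc n) (i + \<sigma>) x y + (\<Sum>j<n. E n $$ (i, j) * Q s (n - 1) j x y))"

lemma ip_mult_recurrence:
  assumes rec: "mult_recurrence \<phi> \<sigma> s E" and i: "i \<le> n" and g: "gaussian_growth g"
  shows "IP s (\<lambda>x y. \<phi> x y * Q s n i x y) g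
    = IP s (Q s (Suc n) (i + \<sigma>)) g + (\<Sum>j<n. E n $$ (i, j) * IP s (Q s (n - 1) j) g)"
proof -
  have expand: "(\<lambda>x y. \<phi> x y * Q s n i x y)
      = (\<lambda>x y. Q s (Suc n) (i + \<sigma>) x y + (\<Sum>j<n. E n $$ (i, j) * Q s (n - 1) j x y))"
    using rec i unfolding mult_recurrence_def by (intro ext) blast
  have "\<sigma> \<le> 1" using rec unfolding mult_recurrence_def by blast
  then have gQ: "gaussian_growth (Q s (Suc n) (i + \<sigma>))"
    using i by (intro gaussian_growth_Q) simp
  have gS: "gaussian_growth (\<lambda>x y. \<Sum>j<n. E n $$ (i, j) * Q s (n - 1) j x y)"
    by (intro gaussian_growth_sum gaussian_growth_scale gaussian_growth_Q) auto
  have lincomb: "IP s (\<lambda>x y. \<Sum>j<n. E n $$ (i, j) * Q s (n - 1) j x y) g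
      = (\<Sum>j<n. E n $$ (i, j) * IP s (Q s (n - 1) j) g)"
    using g by (intro ip_lincomb_left gaussian_growth_Q) auto
  show ?thesis unfolding expand ip_add_left[OF gQ gS g] lincomb ..
qed

lemma ip_mult_Q_Suc:
  assumes rec: "mult_recurrence \<phi> \<sigma> s E" and "a \<le> Suc N" "b \<le> N"
  shows "IP s (\<lambda>x y. \<phi> x y * Q s (Suc N) a x y) (Q s N b)
    = (\<Sum>p<Suc N. E (Suc N) $$ (a, p) * gram s N p b)"
proof -
  have "\<sigma> \<le> 1" using rec unfolding mult_recurrence_def by blast
  then show ?thesis
    using assms by (simp add: ip_mult_recurrence gaussian_growth_Q Q_orthogonal)
qed

lemma ip_mult_Q_pred:
  assumes rec: "mult_recurrence \<phi> \<sigma> s E" and "l \<le> N" "b \<le> Suc N"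
  shows "IP s (\<lambda>x y. \<phi> x y * Q s N l x y) (Q s (Suc N) b) = gram s (Suc N) (l + \<sigma>) b"
  using assms by (simp add: ip_mult_recurrence gaussian_growth_Q Q_orthogonal)

lemma ip_mult_Q_mult_Q:
  assumes rec: "mult_recurrence \<phi> \<sigma> s E" and a: "a \<le> N" and b: "b \<le> N"
  shows "IP s (\<lambda>x y. \<phi> x y * Q s N a x y) (\<lambda>x y. \<phi> x y * Q s N b x y)
    = (\<Sum>p<Suc N. E (Suc N) $$ (a + \<sigma>, p) * gram s N p b)
      + (\<Sum>l<N. E N $$ (a, l) * gram s N (l + \<sigma>) b)"
proof -
  have \<sigma>: "\<sigma> \<le> 1" and g\<phi>: "gaussian_growth \<phi>" using rec unfolding mult_recurrence_def by blast+
  have "IP s (\<lambda>x y. \<phi> x y * Q s N a x y) (\<lambda>x y. \<phi> x y * Q s N b x y)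
      = IP s (Q s (Suc N) (a + \<sigma>)) (\<lambda>x y. \<phi> x y * Q s N b x y)
        + (\<Sum>l<N. E N $$ (a, l) * IP s (Q s (N - 1) l) (\<lambda>x y. \<phi> x y * Q s N b x y))"
    using a b g\<phi> by (intro ip_mult_recurrence[OF rec] gaussian_growth_mult gaussian_growth_Q)
  also have "IP s (Q s (Suc N) (a + \<sigma>)) (\<lambda>x y. \<phi> x y * Q s N b x y)
      = (\<Sum>p<Suc N. E (Suc N) $$ (a + \<sigma>, p) * gram s N p b)"
    using a b \<sigma> by (simp add: ip_mult_Q_Suc[OF rec] flip: ip_mult_swap)
  also have "(\<Sum>l<N. E N $$ (a, l) * IP s (Q s (N - 1) l) (\<lambda>x y. \<phi> x y * Q s N b x y))
      = (\<Sum>l<N. E N $$ (a, l) * gram s N (l + \<sigma>) b)"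
    using ip_mult_Q_pred[OF rec, of _ "N - 1" b] b by (intro sum.cong) (simp_all flip: ip_mult_swap)
  finally show ?thesis .
qed

lemma E_gram_mult_recurrence:
  assumes rec: "mult_recurrence \<phi> \<sigma> s E" and c: "c \<le> Suc m" and j: "j \<le> m"
  shows "(\<Sum>l<Suc m. E (Suc m) $$ (c, l) * gram s m l j) = gram s (Suc m) (j + \<sigma>) c"
proof -
  have "(\<Sum>l<Suc m. E (Suc m) $$ (c, l) * gram s m l j) = IP s (\<lambda>x y. \<phi> x y * Q s (Suc m) c x y) (Q s m j)"
    using ip_mult_Q_Suc[OF rec c j] by simp
  also have "\<dots> = IP s (\<lambda>x y. \<phi> x y * Q s m j x y) (Q s (Suc m) c)"
    by (simp add: ip_mult_swap ip_commute[of s "Q s (Suc m) c"])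
  also have "\<dots> = gram s (Suc m) (j + \<sigma>) c"
    using ip_mult_Q_pred[OF rec j c] .
  finally show ?thesis .
qed

end

locale ops_three_term = monic_ops_family +
  fixes E1 E2 :: "real \<Rightarrow> nat \<Rightarrow> real mat"
  assumes three_term: "\<And>s. three_term (Q s) (E1 s) (E2 s)"
begin

abbreviation E :: "real \<Rightarrow> nat \<Rightarrow> real mat" where
  "E s n \<equiv> E1 s n + E2 s n"

lemma E1_carrier: "E1 s n \<in> carrier_mat (Suc n) n"
  and E2_carrier: "E2 s n \<in> carrier_mat (Suc n) n"
  using three_term[of s] unfolding three_term_def by simp_all

lemma x_recurrence: "mult_recurrence (\<lambda>x y. x) 0 s (E1 s)"
  using three_term[of s] gaussian_growth_x unfolding three_term_def mult_recurrence_def by simp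

lemma y_recurrence: "mult_recurrence (\<lambda>x y. y) 1 s (E2 s)"
  using three_term[of s] gaussian_growth_y unfolding three_term_def mult_recurrence_def by simp

lemma moment_eq_Vmat_gram:
  assumes a: "a \<le> N" and b: "b \<le> N"
  shows "moment s N a b = (\<Sum>p<Suc N. Vmat (E1 s) (E2 s) (Suc N) $$ (a, p) * gram s N p b)"
proof -
  have "(\<lambda>x y. (x\<^sup>2 + y\<^sup>2) * Q s N a x y) = (\<lambda>x y. x * (x * Q s N a x y) + y * (y * Q s N a x y))"
    by (simp add: fun_eq_iff power2_eq_square algebra_simps)
  then have "moment s N a b = IP s (\<lambda>x y. x * Q s N a x y) (\<lambda>x y. x * Q s N b x y)
      + IP s (\<lambda>x y. y * Q s N a x y) (\<lambda>x y. y * Q s N b x y)"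
    using a b by (simp add: ip_add_left gaussian_growth_mult gaussian_growth_x gaussian_growth_y
        gaussian_growth_Q ip_mult_swap)
  also have "\<dots> = (\<Sum>p<Suc N. E1 s (Suc N) $$ (a, p) * gram s N p b)
      + (\<Sum>p<Suc N. E2 s (Suc N) $$ (Suc a, p) * gram s N p b)
      + (\<Sum>l<N. E1 s N $$ (a, l) * gram s N l b)
      + (\<Sum>l<N. E2 s N $$ (a, l) * gram s N (Suc l) b)"
    using ip_mult_Q_mult_Q[OF x_recurrence a b] ip_mult_Q_mult_Q[OF y_recurrence a b] by simp
  also have "\<dots> = (\<Sum>p<Suc N. Vmat (E1 s) (E2 s) (Suc N) $$ (a, p) * gram s N p b)"
  proof -
    have "(\<Sum>l<N. E2 s N $$ (a, l) * gram s N (Suc l) b)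
        = (\<Sum>p<Suc N. (if 0 < p then E2 s N $$ (a, p - 1) else 0) * gram s N p b)"
      by (subst sum.lessThan_Suc_shift) simp
    moreover have "(\<Sum>l<N. E1 s N $$ (a, l) * gram s N l b)
        = (\<Sum>p<Suc N. (if p < N then E1 s N $$ (a, p) else 0) * gram s N p b)"
      by simp
    ultimately show ?thesis
      using a E1_carrier E2_carrier
      by (simp add: Vmat_index distrib_right sum.distrib)
  qed
  finally show ?thesis .
qed

lemma E_gram:
  assumes c: "c \<le> Suc m" and j: "j \<le> m"
  shows "(\<Sum>l<Suc m. E s (Suc m) $$ (c, l) * gram s m l j)
    = gram s (Suc m) c j + gram s (Suc m) c (Suc j)"
proof -
  have "(\<Sum>l<Suc m. E s (Suc m) $$ (c, l) * gram s m l j)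
      = (\<Sum>l<Suc m. E1 s (Suc m) $$ (c, l) * gram s m l j)
        + (\<Sum>l<Suc m. E2 s (Suc m) $$ (c, l) * gram s m l j)"
    using c E1_carrier[of s "Suc m"] E2_carrier[of s "Suc m"]
    by (simp add: distrib_right sum.distrib)
  then show ?thesis
    using E_gram_mult_recurrence[OF x_recurrence c j] E_gram_mult_recurrence[OF y_recurrence c j]
    by (simp add: ip_commute)
qed

lemma xy_Q_recurrence:
  assumes "i \<le> n"
  shows "(x + y) * Q s n i x y = Q s (Suc n) i x y + Q s (Suc n) (Suc i) x y
    + (\<Sum>l<n. E s n $$ (i, l) * Q s (n - 1) l x y)"
proof -
  have "(\<Sum>l<n. E s n $$ (i, l) * Q s (n - 1) l x y)
      = (\<Sum>l<n. E1 s n $$ (i, l) * Q s (n - 1) l x y) + (\<Sum>l<n. E2 s n $$ (i, l) * Q s (n - 1) l x y)"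
    using assms carrier_matD[OF E1_carrier] carrier_matD[OF E2_carrier]
    by (simp add: distrib_right sum.distrib)
  then show ?thesis
    using assms three_term[of s] unfolding three_term_def by (simp add: distrib_right add_ac)
qed

text \<open>By the three term relations the first argument equals \<open>\<Sum>\<^sub>l E\<^sub>m\<^sub>+\<^sub>1(s)\<^sub>i\<^sub>l Q\<^sub>m\<^sub>l(s)\<close>,
  so this is the entry \<open>(i, k)\<close> of \<open>E\<^sub>m\<^sub>+\<^sub>1(s) H\<^sub>m(t)\<close>; written as below, its \<open>s\<close>-derivative
  only involves terms \<open>(Q\<^sub>N(s), P)\<^sub>t\<close> with \<open>deg P < N\<close>.\<close>

definition xy_remainder :: "real \<Rightarrow> nat \<Rightarrow> real \<Rightarrow> nat \<Rightarrow> nat \<Rightarrow> real" where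
  "xy_remainder t m s i k = IP t (\<lambda>x y. (x + y) * Q s (Suc m) i x y
     - Q s (Suc (Suc m)) i x y - Q s (Suc (Suc m)) (Suc i) x y) (Q t m k)"

lemma xy_remainder_eq_E_gram:
  assumes i: "i \<le> Suc m" and k: "k \<le> m"
  shows "xy_remainder t m s i k = (\<Sum>l<Suc m. E s (Suc m) $$ (i, l) * gram t m l k)"
proof -
  have "xy_remainder t m s i k = IP t (\<lambda>x y. \<Sum>l<Suc m. E s (Suc m) $$ (i, l) * Q s m l x y) (Q t m k)"
    unfolding xy_remainder_def by (simp add: xy_Q_recurrence[OF i])
  also have "\<dots> = (\<Sum>l<Suc m. E s (Suc m) $$ (i, l) * IP t (Q s m l) (Q t m k))"
    using k by (intro ip_lincomb_left gaussian_growth_Q) auto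
  also have "\<dots> = (\<Sum>l<Suc m. E s (Suc m) $$ (i, l) * gram t m l k)"
    using k by (intro sum.cong refl, subst ip_Q_cross) auto
  finally show ?thesis .
qed

definition xy_lower :: "real \<Rightarrow> nat \<Rightarrow> nat \<Rightarrow> real \<Rightarrow> real \<Rightarrow> real" where
  "xy_lower t m k = (\<lambda>x y. \<Sum>l<m. E t m $$ (k, l) * Q t (m - 1) l x y)"

lemma xy_lower_eq:
  "k \<le> m \<Longrightarrow> xy_lower t m k
    = (\<lambda>x y. (x + y) * Q t m k x y - Q t (Suc m) k x y - Q t (Suc m) (Suc k) x y)"
  by (simp add: fun_eq_iff xy_lower_def xy_Q_recurrence)

lemma poly_deg_lt_xy_lower: "poly_deg_lt (Suc m) (xy_lower t m k)"
  unfolding xy_lower_def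
proof (intro poly_deg_lt_sum poly_deg_lt_scale)
  fix l assume "l \<in> {..<m}"
  then show "poly_deg_lt (Suc m) (Q t (m - 1) l)"
    using poly_deg_lt_mono[OF poly_deg_lt_Q[of l "m - 1" t], of "Suc m"] by auto
qed simp

lemma xy_remainder_split:
  assumes i: "i \<le> Suc m" and k: "k \<le> m"
  shows "xy_remainder t m s i k = (gram t (Suc m) i k + IP t (Q t (Suc m) i) (Q t (Suc m) (Suc k)))
      + IP t (Q s (Suc m) i) (xy_lower t m k) - IP t (Q s (Suc (Suc m)) i) (Q t m k)
      - IP t (Q s (Suc (Suc m)) (Suc i)) (Q t m k)"
proof -
  have g: "gaussian_growth (xy_lower t m k)"
    by (rule gaussian_growth_poly_deg_lt[OF poly_deg_lt_xy_lower])
  have gxy: "gaussian_growth (\<lambda>x y. (x + y) * Q s (Suc m) i x y)"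
    using i by (intro gaussian_growth_mult gaussian_growth_add gaussian_growth_x gaussian_growth_y
        gaussian_growth_Q)
  have "(\<lambda>x y. (x + y) * Q t m k x y)
      = (\<lambda>x y. Q t (Suc m) k x y + Q t (Suc m) (Suc k) x y + xy_lower t m k x y)"
    by (simp add: xy_lower_eq[OF k])
  then have "IP t (\<lambda>x y. (x + y) * Q s (Suc m) i x y) (Q t m k)
      = IP t (Q s (Suc m) i) (Q t (Suc m) k) + IP t (Q s (Suc m) i) (Q t (Suc m) (Suc k))
        + IP t (Q s (Suc m) i) (xy_lower t m k)"
    using i k g by (simp add: ip_mult_swap ip_add_right gaussian_growth_add gaussian_growth_Q)
  moreover have "xy_remainder t m s i k = IP t (\<lambda>x y. (x + y) * Q s (Suc m) i x y) (Q t m k)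
      - IP t (Q s (Suc (Suc m)) i) (Q t m k) - IP t (Q s (Suc (Suc m)) (Suc i)) (Q t m k)"
    unfolding xy_remainder_def using i k gxy
    by (simp add: ip_diff_left gaussian_growth_diff gaussian_growth_Q)
  ultimately show ?thesis
    using i k by (simp add: ip_Q_cross[where s = s])
qed

lemma ip_xy_radial_Q:
  assumes i: "i \<le> Suc m" and k: "k \<le> m"
  shows "IP t (\<lambda>x y. (x + y) * ((x\<^sup>2 + y\<^sup>2) * Q t (Suc m) i x y)) (Q t m k)
    = IP t (\<lambda>x y. (x\<^sup>2 + y\<^sup>2) * Q t (Suc (Suc m)) i x y) (Q t m k)
      + IP t (\<lambda>x y. (x\<^sup>2 + y\<^sup>2) * Q t (Suc (Suc m)) (Suc i) x y) (Q t m k)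
      + (\<Sum>l<Suc m. E t (Suc m) $$ (i, l) * moment t m l k)"
proof -
  have gA: "gaussian_growth (\<lambda>x y. (x\<^sup>2 + y\<^sup>2) * Q t (Suc (Suc m)) i x y)"
    and gB: "gaussian_growth (\<lambda>x y. (x\<^sup>2 + y\<^sup>2) * Q t (Suc (Suc m)) (Suc i) x y)"
    and gk: "gaussian_growth (Q t m k)"
    using i k by (auto intro!: gaussian_growth_radius_mult gaussian_growth_Q)
  have gC: "gaussian_growth
      (\<lambda>x y. \<Sum>l<Suc m. E t (Suc m) $$ (i, l) * ((x\<^sup>2 + y\<^sup>2) * Q t m l x y))"
    by (intro gaussian_growth_sum gaussian_growth_scale gaussian_growth_radius_mult gaussian_growth_Q) auto
  have "(x + y) * ((x\<^sup>2 + y\<^sup>2) * Q t (Suc m) i x y) = (x\<^sup>2 + y\<^sup>2) * ((x + y) * Q t (Suc m) i x y)"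
    for x y :: real
    by (simp only: mult.left_commute)
  then have "(\<lambda>x y. (x + y) * ((x\<^sup>2 + y\<^sup>2) * Q t (Suc m) i x y))
      = (\<lambda>x y. (x\<^sup>2 + y\<^sup>2) * Q t (Suc (Suc m)) i x y + (x\<^sup>2 + y\<^sup>2) * Q t (Suc (Suc m)) (Suc i) x y
        + (\<Sum>l<Suc m. E t (Suc m) $$ (i, l) * ((x\<^sup>2 + y\<^sup>2) * Q t m l x y)))"
    by (simp add: fun_eq_iff xy_Q_recurrence[OF i, where s = t] distrib_left sum_distrib_left
        mult.left_commute)
  moreover have "IP t (\<lambda>x y. \<Sum>l<Suc m. E t (Suc m) $$ (i, l) * ((x\<^sup>2 + y\<^sup>2) * Q t m l x y)) (Q t m k)
      = (\<Sum>l<Suc m. E t (Suc m) $$ (i, l) * moment t m l k)"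
    using k by (intro ip_lincomb_left gaussian_growth_radius_mult gaussian_growth_Q) auto
  ultimately show ?thesis
    by (simp only: ip_add_left[OF gaussian_growth_add[OF gA gB] gC gk] ip_add_left[OF gA gB gk])
qed

lemma ip_radial_Q_xy_lower:
  assumes i: "i \<le> Suc m" and k: "k \<le> m"
  shows "IP t (\<lambda>x y. (x\<^sup>2 + y\<^sup>2) * Q t (Suc m) i x y) (xy_lower t m k)
    = IP t (\<lambda>x y. (x\<^sup>2 + y\<^sup>2) * Q t (Suc (Suc m)) i x y) (Q t m k)
      + IP t (\<lambda>x y. (x\<^sup>2 + y\<^sup>2) * Q t (Suc (Suc m)) (Suc i) x y) (Q t m k)
      + (\<Sum>l<Suc m. E t (Suc m) $$ (i, l) * moment t m l k)
      - moment t (Suc m) i k - moment t (Suc m) i (Suc k)"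
proof -
  let ?r = "\<lambda>x y. (x\<^sup>2 + y\<^sup>2) * Q t (Suc m) i x y"
  have gr: "gaussian_growth ?r" using i by (intro gaussian_growth_radius_mult gaussian_growth_Q)
  have gxy: "gaussian_growth (\<lambda>x y. (x + y) * Q t m k x y)"
    and gxy': "gaussian_growth (\<lambda>x y. (x + y) * Q t m k x y - Q t (Suc m) k x y)"
    using k by (intro gaussian_growth_diff gaussian_growth_mult gaussian_growth_add gaussian_growth_x
        gaussian_growth_y gaussian_growth_Q, simp_all)+
  have "IP t ?r (xy_lower t m k)
      = IP t ?r (\<lambda>x y. (x + y) * Q t m k x y) - moment t (Suc m) i k - moment t (Suc m) i (Suc k)"
    unfolding xy_lower_eq[OF k]
    using k gr gxy gxy' by (simp add: ip_diff_right gaussian_growth_Q ip_commute[of t ?r "Q t _ _"])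
  also have "IP t ?r (\<lambda>x y. (x + y) * Q t m k x y) = IP t (\<lambda>x y. (x + y) * ?r x y) (Q t m k)"
    by (rule ip_mult_swap[symmetric])
  finally show ?thesis using ip_xy_radial_Q[OF i k] by simp
qed

lemma has_real_derivative_xy_remainder:
  assumes i: "i \<le> Suc m" and k: "k \<le> m"
  shows "((\<lambda>s. xy_remainder t m s i k) has_real_derivative
    moment t (Suc m) i k + moment t (Suc m) i (Suc k)
      - (\<Sum>l<Suc m. E t (Suc m) $$ (i, l) * moment t m l k)) (at t)"
proof -
  have "((\<lambda>s. (gram t (Suc m) i k + IP t (Q t (Suc m) i) (Q t (Suc m) (Suc k)))
      + IP t (Q s (Suc m) i) (xy_lower t m k) - IP t (Q s (Suc (Suc m)) i) (Q t m k)
      - IP t (Q s (Suc (Suc m)) (Suc i)) (Q t m k)) has_real_derivative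
      0 + - IP t (\<lambda>x y. (x\<^sup>2 + y\<^sup>2) * Q t (Suc m) i x y) (xy_lower t m k)
      - - IP t (\<lambda>x y. (x\<^sup>2 + y\<^sup>2) * Q t (Suc (Suc m)) i x y) (Q t m k)
      - - IP t (\<lambda>x y. (x\<^sup>2 + y\<^sup>2) * Q t (Suc (Suc m)) (Suc i) x y) (Q t m k)) (at t)"
    using i poly_deg_lt_mono[OF poly_deg_lt_Q[OF k], of "Suc (Suc m)" t]
    by (intro DERIV_diff DERIV_add DERIV_const has_real_derivative_ip_Q poly_deg_lt_xy_lower) auto
  then show ?thesis
    unfolding xy_remainder_split[OF i k] using ip_radial_Q_xy_lower[OF i k, where t = t]
    by (elim DERIV_cong) linarith
qed

lemma commutator_gram:
  assumes i: "i \<le> Suc m" and k: "k \<le> m"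
  shows "(\<Sum>l<Suc m. (Vmat (E1 t) (E2 t) (Suc (Suc m)) * E t (Suc m)
        - E t (Suc m) * Vmat (E1 t) (E2 t) (Suc m)) $$ (i, l) * gram t m l k)
    = moment t (Suc m) i k + moment t (Suc m) i (Suc k)
      - (\<Sum>l<Suc m. E t (Suc m) $$ (i, l) * moment t m l k)"
proof -
  let ?E = "E t (Suc m)"
  let ?V' = "Vmat (E1 t) (E2 t) (Suc (Suc m))" and ?V = "Vmat (E1 t) (E2 t) (Suc m)"
  have cE: "?E \<in> carrier_mat (Suc (Suc m)) (Suc m)"
    using E1_carrier E2_carrier by (intro add_carrier_mat)
  have cV': "?V' \<in> carrier_mat (Suc (Suc m)) (Suc (Suc m))" and cV: "?V \<in> carrier_mat (Suc m) (Suc m)"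
    by (intro Vmat_carrier E1_carrier E2_carrier)+
  have entry: "(?V' * ?E - ?E * ?V) $$ (i, l)
      = (\<Sum>p<Suc (Suc m). ?V' $$ (i, p) * ?E $$ (p, l)) - (\<Sum>q<Suc m. ?E $$ (i, q) * ?V $$ (q, l))"
    if "l < Suc m" for l
    using that i index_mult_mat_sum[OF cV' cE, of i l] index_mult_mat_sum[OF cE cV, of i l]
      carrier_matD[OF cE] carrier_matD[OF cV] carrier_matD[OF cV']
    by simp
  have "(\<Sum>l<Suc m. (?V' * ?E - ?E * ?V) $$ (i, l) * gram t m l k)
      = (\<Sum>l<Suc m. ((\<Sum>p<Suc (Suc m). ?V' $$ (i, p) * ?E $$ (p, l))
          - (\<Sum>q<Suc m. ?E $$ (i, q) * ?V $$ (q, l))) * gram t m l k)"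
    by (intro sum.cong refl) (simp add: entry)
  also have "\<dots> = (\<Sum>p<Suc (Suc m). ?V' $$ (i, p) * (\<Sum>l<Suc m. ?E $$ (p, l) * gram t m l k))
        - (\<Sum>q<Suc m. ?E $$ (i, q) * (\<Sum>l<Suc m. ?V $$ (q, l) * gram t m l k))"
    by (simp only: left_diff_distrib sum_subtractf sum_swap_mult)
  also have "(\<Sum>p<Suc (Suc m). ?V' $$ (i, p) * (\<Sum>l<Suc m. ?E $$ (p, l) * gram t m l k))
      = (\<Sum>p<Suc (Suc m). ?V' $$ (i, p) * (gram t (Suc m) p k + gram t (Suc m) p (Suc k)))"
    using k by (intro sum.cong refl) (simp add: E_gram less_Suc_eq_le del: sum.lessThan_Suc)
  also have "\<dots> = moment t (Suc m) i k + moment t (Suc m) i (Suc k)"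
    using i k by (simp add: distrib_left sum.distrib moment_eq_Vmat_gram del: sum.lessThan_Suc)
  also have "(\<Sum>q<Suc m. ?E $$ (i, q) * (\<Sum>l<Suc m. ?V $$ (q, l) * gram t m l k))
      = (\<Sum>q<Suc m. ?E $$ (i, q) * moment t m q k)"
    using k by (intro sum.cong refl) (simp add: moment_eq_Vmat_gram less_Suc_eq_le del: sum.lessThan_Suc)
  finally show ?thesis .
qed

end

theorem theorem6p2:
  fixes a40 a22 a04 :: real
    and Q :: "real \<Rightarrow> nat \<Rightarrow> nat \<Rightarrow> real \<Rightarrow> real \<Rightarrow> real"
    and E1 E2 :: "real \<Rightarrow> nat \<Rightarrow> real mat"
    and t :: real and n i j :: nat
  assumes "a40 \<ge> 0" "a22 \<ge> 0" "a04 \<ge> 0"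
    and "a40 + a22 > 0" "a22 + a04 > 0"
    and "\<And>s. monic_OPS a40 a22 a04 s (Q s)"
    and "\<And>s. three_term (Q s) (E1 s) (E2 s)"
    and "n \<ge> 1" "i \<le> n" "j < n"
  shows "((\<lambda>s. (E1 s n + E2 s n) $$ (i, j)) has_real_derivative
           (Vmat (E1 t) (E2 t) (n + 1) * (E1 t n + E2 t n)
              - (E1 t n + E2 t n) * Vmat (E1 t) (E2 t) n) $$ (i, j)) (at t)"
proof -
  (* The sign conditions on the coefficients are not needed: the existence of the monic
     orthogonal system already forces every W_s to be integrable (lemma integrable_W). *)
  interpret ops_three_term a40 a22 a04 Q E1 E2
    using assms(6,7) by unfold_locales
  obtain m where n: "n = Suc m" using assms(8) by (cases n) auto
  have i: "i \<le> Suc m" and j: "j < Suc m" using assms(9,10) n by auto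
  let ?T = "Vmat (E1 t) (E2 t) (Suc (Suc m)) * E t (Suc m) - E t (Suc m) * Vmat (E1 t) (E2 t) (Suc m)"
  have "((\<lambda>s. E s (Suc m) $$ (i, j)) has_real_derivative ?T $$ (i, j)) (at t)"
  proof (rule has_real_derivative_cancel_pos_def[where H = "gram t m" and n = "Suc m"
        and e = "\<lambda>s l. E s (Suc m) $$ (i, l)" and r = "\<lambda>s k. xy_remainder t m s i k"
        and d = "\<lambda>l. ?T $$ (i, l)"])
    show "(\<Sum>k<Suc m. \<Sum>l<Suc m. v k * v l * gram t m k l) > 0" if "\<exists>k<Suc m. v k \<noteq> 0" for v
      using gram_pos_def[of m v t] that by (simp add: lessThan_Suc_atMost less_Suc_eq_le)
    show "(\<Sum>l<Suc m. E s (Suc m) $$ (i, l) * gram t m l k) = xy_remainder t m s i k"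
      if "k < Suc m" for s k
      using xy_remainder_eq_E_gram[OF i] that by simp
    show "((\<lambda>s. xy_remainder t m s i k) has_real_derivative
        (\<Sum>l<Suc m. ?T $$ (i, l) * gram t m l k)) (at t)" if "k < Suc m" for k
      using has_real_derivative_xy_remainder[OF i] commutator_gram[OF i] that by simp
  qed (rule j)
  then show ?thesis using n by simp
qed

end
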